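(* Consider system (5) in the standing setup with fixed $\sigma$ and weights. If $\mathcal G_{\sigma(t)}$ is uniformly jointly L-connected (UJLC), then system (5) is SiISS with respect to $\mathcal L(y(t))$.
   Context: Standing setup. Fix integers $n\ge 2$, $k\ge 1$, $d\ge 1$. The follower set is $\mathcal V_F=\{1,\dots,n\}$ and the leader set is $\mathcal V_L=\{\hat 1,\dots,\hat k\}$ (disjoint from $\mathcal V_F$); $\mathcal V=\mathcal V_F\cup\mathcal V_L$. The interaction topology is a time-varying digraph $\mathcal G_{\sigma(t)}=(\mathcal V,\mathcal E_{\sigma(t)})$, where $\sigma:[0,\infty)\to\mathcal P$ is a piecewise constant switching signal taking values in a finite set $\mathcal P$ of digraphs on $\mathcal V$; no arc of any of these digraphs enters a leader. An arc $(j,i)$ means that $i$ receives information from $j$. Dwell-time assumption: any two consecutive switching instants of $\sigma$ are separated by at least $\tau_D>0$. For $i\in\mathcal V_F$, $N_i(\sigma(t))=\{j\in\mathcal V_F:(j,i)\in\mathcal E_{\sigma(t)}\}$ and $L_i(\sigma(t))=\{j\in\mathcal V_L:(j,i)\in\mathcal E_{\sigma(t)}\}$. $\mathcal G^F_{\sigma(t)}$ denotes the subgraph of $\mathcal G_{\sigma(t)}$ induced on $\mathcal V_F$. For $0\le t_1<t_2\le\infty$ the joint graph is $\mathcal G([t_1,t_2))=(\mathcal V,\bigcup_{t\in[t_1,t_2)}\mathcal E_{\sigma(t)})$, and $\mathcal G^F([t_1,t_2))$ is its subgraph induced on $\mathcal V_F$. System (5): $\dot y_i=u_i(y,t)$ for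 $i=1,\dots,k$, and $\dot x_i=\sum_{j\in N_i(\sigma(t))}a_{ij}(x,y,t)(x_j-x_i)+\sum_{j\in L_i(\sigma(t))}b_{ij}(x,y,t)(y_j-x_i)+w_i(t)$ for $i=1,\dots,n$, where $x_i,y_j\in\mathbb R^d$, $x=(x_1,\dots,x_n)$, $y=(y_1,\dots,y_k)$; each $u_i(y,t)$ is continuous in $y$ and piecewise continuous in $t$; each $w_i$ is continuous; the weights $a_{ij},b_{ij}$ are continuous and satisfy $a_*\le a_{ij}(x,y,t)\le a^*$, $b_{ij}(x,y,t)\ge b_*$ for all $x,y,t$, with constants $0<a_*\le a^*$, $b_*>0$. Initial time is $0$, $x^0=x(0)$, $y^0=y(0)$. Along a trajectory, $z(t)=(u_1(y(t),t),\dots,u_k(y(t),t),w_1(t),\dots,w_n(t))\in\mathbb R^{(n+k)d}$ and $\|z\|_\infty=\sup_{t\ge0}|z(t)|$. Set notation: $|\cdot|$ is the Euclidean norm; for a closed convex $K\subset\mathbb R^d$, $|v|_K=\inf_{p\in K}|v-p|$; $\mathcal L(y(t))=\mathrm{co}\{y_1(t),\dots,y_k(t)\}$ (convex hull); $|x(t)|_{\mathcal L(y(t))}=\max_{i\in\mathcal V_F}|x_i(t)|_{\mathcal L(y(t))}$. Connectivity: a digraph on $\mathcal V$ is L-connected if for every $i\in\mathcal V_F$ there is a directed path from some leader $j\in\mathcal V_L$ to $i$. $\mathcal G_{\sigma(t)}$ is jointly L-connected (JLC) if $\mathcal G([t,\infty))$ is L-connected for every $t\ge0$; it is uniformly jointly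 L-connected (UJLC) if there is $T>0$ such that $\mathcal G([t,t+T))$ is L-connected for every $t\ge0$. SiISS: system (5) is (globally, generalized) set integral-input-to-state stable with respect to $\mathcal L(y(t))$ if there exist a class-$\mathcal{KL}$ function $\beta$ and a class-$\mathcal K$ function $\gamma$ such that for all admissible $u_i,w_i$ and all initial conditions $x^0\in\mathbb R^{nd}$, $y^0\in\mathbb R^{kd}$: $|x(t)|_{\mathcal L(y(t))}\le\beta(|x^0|_{\mathcal L(y^0)},t)+\int_0^t\gamma(|z(s)|)\,ds$ for all $t\ge0$. *)

theory Defs
  imports "HOL-Analysis.Analysis"
begin

text \<open>Vertices: followers are \<open>Inl i\<close> with \<open>i :: 'n\<close>, leaders are \<open>Inr j\<close> with \<open>j :: 'k\<close>.
  A digraph on the vertex set is its arc relation; an arc \<open>(p, q)\<close> means q receives from p.\<close>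

type_synonym ('n, 'k) digraph = "('n + 'k) rel"

definition no_arc_into_leader :: "('n, 'k) digraph \<Rightarrow> bool" where
  "no_arc_into_leader E \<longleftrightarrow> (\<forall>(p, q) \<in> E. isl q)"

definition dwell_time_signal :: "(real \<Rightarrow> 'g) \<Rightarrow> real \<Rightarrow> bool" where
  "dwell_time_signal \<sigma> tauD \<longleftrightarrow> tauD > 0 \<and>
     (\<exists>ts :: nat \<Rightarrow> real. 0 < ts 0 \<and> (\<forall>m. ts m + tauD \<le> ts (Suc m)) \<and>
        (\<forall>t \<in> {0..<ts 0}. \<sigma> t = \<sigma> 0) \<and>
        (\<forall>m. \<forall>t \<in> {ts m..<ts (Suc m)}. \<sigma> t = \<sigma> (ts m)))"

definition joint_graph :: "(real \<Rightarrow> ('n, 'k) digraph) \<Rightarrow> real \<Rightarrow> real \<Rightarrow> ('n, 'k) digraph" where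
  "joint_graph \<sigma> t1 t2 = (\<Union>t \<in> {t1..<t2}. \<sigma> t)"

definition L_connected :: "('n, 'k) digraph \<Rightarrow> bool" where
  "L_connected E \<longleftrightarrow> (\<forall>i. \<exists>j. (Inr j, Inl i) \<in> E\<^sup>+)"

definition UJLC :: "(real \<Rightarrow> ('n, 'k) digraph) \<Rightarrow> bool" where
  "UJLC \<sigma> \<longleftrightarrow> (\<exists>T > 0. \<forall>t \<ge> 0. L_connected (joint_graph \<sigma> t (t + T)))"

definition piecewise_continuous :: "(real \<Rightarrow> 'a::real_normed_vector) \<Rightarrow> bool" where
  "piecewise_continuous f \<longleftrightarrow> (\<exists>D. (\<forall>a b. finite (D \<inter> {a..b})) \<and> continuous_on (- D) f \<and>
     (\<forall>t \<in> D. (\<exists>l. (f \<longlongrightarrow> l) (at_left t)) \<and> (\<exists>l. (f \<longlongrightarrow> l) (at_right t))))"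

definition follower_rhs ::
  "(real \<Rightarrow> ('n::finite, 'k::finite) digraph)
   \<Rightarrow> ('n \<Rightarrow> 'n \<Rightarrow> real^'d^'n \<Rightarrow> real^'d^'k \<Rightarrow> real \<Rightarrow> real)
   \<Rightarrow> ('n \<Rightarrow> 'k \<Rightarrow> real^'d^'n \<Rightarrow> real^'d^'k \<Rightarrow> real \<Rightarrow> real)
   \<Rightarrow> ('n \<Rightarrow> real \<Rightarrow> real^'d) \<Rightarrow> 'n \<Rightarrow> real^'d^'n \<Rightarrow> real^'d^'k \<Rightarrow> real \<Rightarrow> real^'d" where
  "follower_rhs \<sigma> a b w i x y t =
     (\<Sum>j \<in> {j. (Inl j, Inl i) \<in> \<sigma> t}. a i j x y t *\<^sub>R (x $ j - x $ i))
   + (\<Sum>j \<in> {j. (Inr j, Inl i) \<in> \<sigma> t}. b i j x y t *\<^sub>R (y $ j - x $ i))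
   + w i t"

definition is_solution5 ::
  "(real \<Rightarrow> ('n::finite, 'k::finite) digraph)
   \<Rightarrow> ('n \<Rightarrow> 'n \<Rightarrow> real^'d^'n \<Rightarrow> real^'d^'k \<Rightarrow> real \<Rightarrow> real)
   \<Rightarrow> ('n \<Rightarrow> 'k \<Rightarrow> real^'d^'n \<Rightarrow> real^'d^'k \<Rightarrow> real \<Rightarrow> real)
   \<Rightarrow> ('k \<Rightarrow> real^'d^'k \<Rightarrow> real \<Rightarrow> real^'d)
   \<Rightarrow> ('n \<Rightarrow> real \<Rightarrow> real^'d)
   \<Rightarrow> (real \<Rightarrow> real^'d^'n) \<Rightarrow> (real \<Rightarrow> real^'d^'k) \<Rightarrow> bool" where
  "is_solution5 \<sigma> a b u w x y \<longleftrightarrow>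
     (\<forall>t \<ge> 0. \<forall>j. ((\<lambda>s. u j (y s) s) has_integral (y t $ j - y 0 $ j)) {0..t}) \<and>
     (\<forall>t \<ge> 0. \<forall>i. ((\<lambda>s. follower_rhs \<sigma> a b w i (x s) (y s) s) has_integral (x t $ i - x 0 $ i)) {0..t})"

text \<open>Distance of the followers to the convex hull of the leaders: max_i |x_i|_L(y).\<close>
definition hull_dist :: "real^'d^'n::finite \<Rightarrow> real^'d^'k::finite \<Rightarrow> real" where
  "hull_dist x y = (MAX i. infdist (x $ i) (convex hull (range (\<lambda>j. y $ j))))"

definition z_norm :: "('k::finite \<Rightarrow> real^'d^'k \<Rightarrow> real \<Rightarrow> real^'d) \<Rightarrow> ('n::finite \<Rightarrow> real \<Rightarrow> real^'d)
   \<Rightarrow> (real \<Rightarrow> real^'d^'k) \<Rightarrow> real \<Rightarrow> real" where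
  "z_norm u w y t = sqrt ((\<Sum>j\<in>UNIV. (norm (u j (y t) t))\<^sup>2) + (\<Sum>i\<in>UNIV. (norm (w i t))\<^sup>2))"

definition class_K :: "(real \<Rightarrow> real) \<Rightarrow> bool" where
  "class_K \<gamma> \<longleftrightarrow> continuous_on {0..} \<gamma> \<and> \<gamma> 0 = 0 \<and> strict_mono_on {0..} \<gamma>"

definition class_KL :: "(real \<Rightarrow> real \<Rightarrow> real) \<Rightarrow> bool" where
  "class_KL \<beta> \<longleftrightarrow> (\<forall>t \<ge> 0. class_K (\<lambda>r. \<beta> r t)) \<and>
     (\<forall>r \<ge> 0. antimono_on {0..} (\<beta> r) \<and> ((\<beta> r) \<longlongrightarrow> 0) at_top)"

end

theory Submission
  imports Defs
begin

text \<open>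
  Fix a unit vector \<open>e\<close>. For follower \<open>i\<close> consider the projection \<open>e \<bullet> x\<^sub>i\<close>, shifted down by the
  leaders' support value \<open>max\<^sub>j e \<bullet> y\<^sub>j\<close> at the start \<open>t0\<close> of a time interval, by a bound on
  how far the leaders move, and by the accumulated disturbance mass. These scalar functions
  are subsolutions of a linear consensus-type drift (section 6). Comparison principles for
  scalar differential inequalities (section 1) then give the scalar consensus estimates of
  section 2: a common upper bound \<open>M\<close> persists, an active leader arc creates a relative gap
  below \<open>M\<close>, an active follower arc transmits an existing gap, and under a spreading condition
  every block of \<open>CARD('n)\<close> windows contracts \<open>M\<close> by a fixed factor. Uniform joint
  L-connectivity plus the dwell time yields the spreading condition (section 3). Since the
  distance of a point to the leaders' convex hull is the largest support gap over unit vectors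
  (section 4), this turns into a bound for the hull distance: it never grows by more than the
  input contributions and contracts by \<open>contraction_rate\<close> over each block (section 7).
  Iterating gives an exponential \<open>KL\<close> bound plus a linear function of the input integral,
  which is the set-iISS estimate (section 8).
\<close>

section \<open>Comparison principles for scalar functions\<close>

lemma mono_if_deriv_nonneg_off_finite:
  fixes f :: "real \<Rightarrow> real"
  assumes S: "finite S" and ab: "a \<le> b" and cont: "continuous_on {a..b} f"
    and der: "\<And>x. x \<in> {a<..<b} - S \<Longrightarrow> \<exists>d. (f has_real_derivative d) (at x) \<and> d \<ge> 0"
  shows "f a \<le> f b"
proof -
  define f' where "f' x = (if x \<in> {a<..<b} - S then (SOME d. (f has_real_derivative d) (at x) \<and> d \<ge> 0) else 0)" for x
  have f': "(f has_real_derivative f' x) (at x) \<and> f' x \<ge> 0" if "x \<in> {a<..<b} - S" for x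
    using someI_ex[OF der[OF that]] that unfolding f'_def by auto
  have "(f has_vector_derivative f' x) (at x)" if "x \<in> {a<..<b} - S" for x
    using f'[OF that] by (simp add: has_real_derivative_iff_has_vector_derivative)
  then have "(f' has_integral (f b - f a)) {a..b}"
    by (rule fundamental_theorem_of_calculus_interior_strong[OF S ab _ cont])
  moreover have "\<forall>x\<in>{a..b}. 0 \<le> f' x" using f' unfolding f'_def by auto
  ultimately have "0 \<le> f b - f a" using has_integral_nonneg by blast
  then show ?thesis by simp
qed

lemma value_dominated_from_left:
  fixes g :: "real \<Rightarrow> real"
  assumes S: "finite S" and as: "a < s" and cont: "continuous_on {a..s} g" and \<delta>: "\<delta> > 0"
    and der: "\<And>r. s - \<delta> < r \<Longrightarrow> r < s \<Longrightarrow> r \<notin> S \<Longrightarrow> \<exists>d. (g has_real_derivative d) (at r) \<and> d \<le> 0"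
  shows "\<exists>q\<in>{a..<s}. g s \<le> g q"
proof -
  define q where "q = max a (s - \<delta>/2)"
  have q: "q \<in> {a..<s}" using as \<delta> unfolding q_def by auto
  have "(\<lambda>x. - g x) q \<le> (\<lambda>x. - g x) s"
  proof (rule mono_if_deriv_nonneg_off_finite[OF S, of q s "\<lambda>x. - g x"])
    show "q \<le> s" using q by auto
    show "continuous_on {q..s} (\<lambda>x. - g x)"
      by (intro continuous_intros continuous_on_subset[OF cont]) (use q in auto)
    fix x assume x: "x \<in> {q<..<s} - S"
    then have "s - \<delta> < x" "x < s" "x \<notin> S" unfolding q_def by auto
    from der[OF this] obtain d where "(g has_real_derivative d) (at x)" "d \<le> 0" by blast
    then show "\<exists>d. ((\<lambda>x. - g x) has_real_derivative d) (at x) \<and> 0 \<le> d"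
      by (intro exI[of _ "-d"]) (auto intro: derivative_eq_intros)
  qed
  then show ?thesis using q by auto
qed

lemma first_crossing:
  fixes f h :: "'i \<Rightarrow> real \<Rightarrow> real"
  assumes I: "finite I" and ab: "a \<le> b"
    and cf: "\<And>i. i \<in> I \<Longrightarrow> continuous_on {a..b} (f i)"
    and ch: "\<And>i. i \<in> I \<Longrightarrow> continuous_on {a..b} (h i)"
    and start: "\<And>i. i \<in> I \<Longrightarrow> f i a < h i a"
    and step: "\<And>s i. s \<in> {a<..b} \<Longrightarrow> i \<in> I \<Longrightarrow> f i s = h i s \<Longrightarrow>
        (\<forall>j\<in>I. \<forall>r\<in>{a..<s}. f j r < h j r) \<Longrightarrow> (\<forall>j\<in>I. f j s \<le> h j s) \<Longrightarrow>
        \<exists>q\<in>{a..<s}. f i s - h i s \<le> f i q - h i q"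
  shows "\<forall>i\<in>I. \<forall>s\<in>{a..b}. f i s < h i s"
proof (rule ccontr)
  assume neg: "\<not> ?thesis"
  define C where "C = (\<Union>i\<in>I. {s\<in>{a..b}. h i s \<le> f i s})"
  have clo: "closed C" unfolding C_def
  proof (intro closed_UN[OF I] ballI)
    fix i assume i: "i \<in> I"
    have "continuous_on {a..b} (\<lambda>s. f i s - h i s)" using cf[OF i] ch[OF i] by (intro continuous_intros)
    then have "closed ({a..b} \<inter> (\<lambda>s. f i s - h i s) -` {0..})"
      by (intro continuous_closed_preimage) auto
    moreover have "{a..b} \<inter> (\<lambda>s. f i s - h i s) -` {0..} = {s \<in> {a..b}. h i s \<le> f i s}" by auto
    ultimately show "closed {s \<in> {a..b}. h i s \<le> f i s}" by simp
  qed
  have ne: "C \<noteq> {}" using neg unfolding C_def by (force simp: not_less)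
  have bdd: "bdd_below C" unfolding C_def by (auto intro: bdd_belowI[of _ a])
  define s where "s = Inf C"
  have sC: "s \<in> C" unfolding s_def using closed_contains_Inf[OF ne bdd clo] .
  have sle: "\<And>r. r \<in> C \<Longrightarrow> s \<le> r" unfolding s_def using bdd by (auto intro: cInf_lower)
  obtain i where i: "i \<in> I" "s \<in> {a..b}" "h i s \<le> f i s" using sC unfolding C_def by auto
  have sa: "a < s" using start[OF i(1)] i by (cases "s = a") auto
  have below: "\<forall>j\<in>I. \<forall>r\<in>{a..<s}. f j r < h j r"
  proof (intro ballI)
    fix j r assume j: "j \<in> I" and r: "r \<in> {a..<s}"
    have "r \<notin> C" using sle r by force
    then show "f j r < h j r" using j r i(2) unfolding C_def by auto
  qed
  have at_s: "\<forall>j\<in>I. f j s \<le> h j s"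
  proof
    fix j assume j: "j \<in> I"
    let ?D = "{r \<in> {a..s}. f j r - h j r \<le> 0}"
    have "continuous_on {a..s} (\<lambda>s. f j s - h j s)"
      using cf[OF j] ch[OF j] i(2) by (intro continuous_intros) (auto elim: continuous_on_subset)
    then have "closed ({a..s} \<inter> (\<lambda>s. f j s - h j s) -` {..0})"
      by (intro continuous_closed_preimage) auto
    moreover have "{a..s} \<inter> (\<lambda>s. f j s - h j s) -` {..0} = ?D" by auto
    ultimately have "closed ?D" by simp
    moreover have "{a..<s} \<subseteq> ?D" using below j by fastforce
    ultimately have "closure {a..<s} \<subseteq> ?D" by (metis closure_minimal)
    moreover have "s \<in> closure {a..<s}" using sa by simp
    ultimately have "s \<in> ?D" by blast
    then show "f j s \<le> h j s" by simp
  qed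
  have eq: "f i s = h i s" using at_s i by force
  obtain q where q: "q \<in> {a..<s}" "f i s - h i s \<le> f i q - h i q"
    using step[of s i] sa i eq below at_s by auto
  then show False using below i(1) eq by force
qed

lemma eventually_left_interval:
  fixes s :: real
  assumes ev: "eventually P (at s within {a..b})" and as: "a < s" and sb: "s \<le> b"
  shows "\<exists>\<delta>>0. \<forall>r. s - \<delta> < r \<longrightarrow> r < s \<longrightarrow> P r"
proof -
  obtain d where d: "d > 0" "\<forall>x\<in>{a..b}. x \<noteq> s \<and> dist x s < d \<longrightarrow> P x"
    using ev unfolding eventually_at by blast
  show ?thesis
  proof (intro exI[of _ "min d (s - a)"] conjI allI impI)
    show "0 < min d (s - a)" using d as by auto
    fix r assume "s - min d (s - a) < r" "r < s"
    then show "P r" using d(2)[rule_format, of r] sb by (auto simp: dist_real_def)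
  qed
qed

lemma barrier_principle:
  fixes z :: "'i \<Rightarrow> real \<Rightarrow> real" and h h' :: "real \<Rightarrow> real"
  assumes I: "finite I" and S: "finite S" and ab: "a \<le> b"
    and cz: "\<And>i. i \<in> I \<Longrightarrow> continuous_on {a..b} (z i)"
    and hder: "\<And>r. (h has_real_derivative h' r) (at r)"
    and start: "\<And>i. i \<in> I \<Longrightarrow> z i a < h a"
    and touch: "\<And>s i. s \<in> {a<..b} \<Longrightarrow> i \<in> I \<Longrightarrow> z i s = h s \<Longrightarrow> (\<forall>j\<in>I. z j s \<le> h s) \<Longrightarrow>
        \<exists>\<delta>>0. \<forall>r. s - \<delta> < r \<longrightarrow> r < s \<longrightarrow> a < r \<longrightarrow> r \<notin> S \<longrightarrow>
          (\<exists>d. (z i has_real_derivative d) (at r) \<and> d \<le> h' r)"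
  shows "\<forall>i\<in>I. \<forall>s\<in>{a..b}. z i s < h s"
proof -
  have hcont: "continuous_on {a..b} h"
    using hder by (intro continuous_at_imp_continuous_on ballI DERIV_isCont) blast
  have "\<forall>i\<in>I. \<forall>s\<in>{a..b}. z i s < (\<lambda>_. h) i s"
  proof (rule first_crossing[where f=z and h="\<lambda>_. h", OF I ab cz _ start])
    show "continuous_on {a..b} ((\<lambda>_. h) i)" for i using hcont by simp
    fix s i assume s: "s \<in> {a<..b}" and i: "i \<in> I" and eq: "z i s = (\<lambda>_. h) i s"
      and all: "\<forall>j\<in>I. z j s \<le> (\<lambda>_. h) j s"
    obtain \<delta> where \<delta>: "\<delta> > 0" and der: "\<forall>r. s - \<delta> < r \<longrightarrow> r < s \<longrightarrow> a < r \<longrightarrow> r \<notin> S \<longrightarrow>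
        (\<exists>d. (z i has_real_derivative d) (at r) \<and> d \<le> h' r)"
      using touch[OF s i] eq all by auto
    have "\<exists>q\<in>{a..<s}. (\<lambda>r. z i r - h r) s \<le> (\<lambda>r. z i r - h r) q"
    proof (rule value_dominated_from_left[OF S _ _ _])
      show "a < s" "0 < min \<delta> (s - a)" using s \<delta> by auto
      show "continuous_on {a..s} (\<lambda>r. z i r - h r)"
        using cz[OF i] hcont s by (intro continuous_intros) (auto elim: continuous_on_subset)
      fix r assume r: "s - min \<delta> (s - a) < r" "r < s" "r \<notin> S"
      then have "s - \<delta> < r" "a < r" by auto
      then obtain d where "(z i has_real_derivative d) (at r)" "d \<le> h' r" using der r by blast
      then show "\<exists>d. ((\<lambda>r. z i r - h r) has_real_derivative d) (at r) \<and> d \<le> 0"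
        using DERIV_diff[OF _ hder] by (intro exI[of _ "d - h' r"]) auto
    qed
    then show "\<exists>q\<in>{a..<s}. z i s - (\<lambda>_. h) i s \<le> z i q - (\<lambda>_. h) i q" by simp
  qed
  then show ?thesis by simp
qed

text \<open>Comparison for the linear differential inequality \<open>z' \<le> c (A - z)\<close> (required only
  where \<open>z \<ge> 0\<close>): \<open>z\<close> stays below the solution \<open>A + B e\<^sup>-\<^sup>c\<^sup>(\<^sup>s\<^sup>-\<^sup>a\<^sup>)\<close> of the equality.\<close>
lemma linear_comparison:
  fixes z :: "real \<Rightarrow> real"
  assumes S: "finite S" and ab: "a \<le> b" and c: "c \<ge> 0" and A: "A \<ge> 0" and AB: "A + B \<ge> 0"
    and cont: "continuous_on {a..b} z"
    and der: "\<And>r. r \<in> {a<..<b} - S \<Longrightarrow>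
                \<exists>d. (z has_real_derivative d) (at r) \<and> (z r \<ge> 0 \<longrightarrow> d \<le> c * (A - z r))"
    and start: "z a \<le> A + B"
  shows "\<forall>s\<in>{a..b}. z s \<le> A + B * exp (- c * (s - a))"
proof (intro ballI)
  fix s0 assume s0: "s0 \<in> {a..b}"
  have sol_nonneg: "A + B * exp (- c * (s - a)) \<ge> 0" if "s \<ge> a" for s
  proof -
    define E where "E = exp (- c * (s - a))"
    have "E \<le> 1" "E > 0" using c that unfolding E_def by auto
    then have "0 \<le> A * (1 - E) + (A + B) * E" using A AB by simp
    also have "\<dots> = A + B * E" by (simp add: algebra_simps)
    finally show ?thesis unfolding E_def .
  qed
  show "z s0 \<le> A + B * exp (- c * (s0 - a))"
  proof (rule field_le_epsilon)
    fix e :: real assume e: "e > 0"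
    define h where "h s = A + B * exp (- c * (s - a)) + e" for s
    define h' where "h' r = - c * B * exp (- c * (r - a))" for r
    have hder: "(h has_real_derivative h' r) (at r)" for r
      unfolding h_def h'_def by (auto intro!: derivative_eq_intros)
    have hcont: "continuous_on {a..b} h" unfolding h_def by (intro continuous_intros)
    have "\<forall>i\<in>{()}. \<forall>s\<in>{a..b}. (\<lambda>_. z) i s < h s"
    proof (rule barrier_principle[OF _ S ab _ hder])
      show "(\<lambda>_. z) i a < h a" for i using start e unfolding h_def by simp
      fix s i assume s: "s \<in> {a<..b}" and eq: "(\<lambda>_. z) i s = h s"
      have zs: "z s > 0" using eq sol_nonneg[of s] s e unfolding h_def by auto
      have "((\<lambda>r. h r - z r) \<longlongrightarrow> h s - z s) (at s within {a..b})"
        using hcont cont s by (intro tendsto_intros) (auto simp: continuous_on_def)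
      then have "eventually (\<lambda>r. h r - z r < e) (at s within {a..b})"
        using order_tendstoD(2) eq e by simp
      moreover have "(z \<longlongrightarrow> z s) (at s within {a..b})"
        using cont s by (auto simp: continuous_on_def)
      then have "eventually (\<lambda>r. z r > 0) (at s within {a..b})"
        using order_tendstoD(1) zs by blast
      ultimately have "eventually (\<lambda>r. h r - z r < e \<and> z r > 0) (at s within {a..b})"
        by (rule eventually_conj)
      then obtain \<delta> where \<delta>: "\<delta> > 0" "\<forall>r. s - \<delta> < r \<longrightarrow> r < s \<longrightarrow> h r - z r < e \<and> z r > 0"
        using eventually_left_interval[of _ s a b] s by auto
      have "\<exists>d. (z has_real_derivative d) (at r) \<and> d \<le> h' r"
        if r: "s - \<delta> < r" "r < s" "a < r" "r \<notin> S" for r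
      proof -
        obtain d where d: "(z has_real_derivative d) (at r)" "z r \<ge> 0 \<longrightarrow> d \<le> c * (A - z r)"
          using der r s by fastforce
        have hz: "h r - z r < e" "z r > 0" using \<delta>(2) r by auto
        have "d \<le> c * (A - z r)" using d(2) hz by auto
        also have "\<dots> \<le> c * (A - (h r - e))" using c hz by (intro mult_left_mono) auto
        also have "\<dots> = h' r" unfolding h_def h'_def by (simp add: algebra_simps)
        finally show ?thesis using d(1) by auto
      qed
      then show "\<exists>\<delta>>0. \<forall>r. s - \<delta> < r \<longrightarrow> r < s \<longrightarrow> a < r \<longrightarrow> r \<notin> S \<longrightarrow>
          (\<exists>d. (z has_real_derivative d) (at r) \<and> d \<le> h' r)" using \<delta>(1) by blast
    qed (use cont in auto)
    then have "z s0 < h s0" using s0 by blast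
    then show "z s0 \<le> A + B * exp (- c * (s0 - a)) + e" unfolding h_def by simp
  qed
qed

lemma max_principle:
  fixes z :: "'i::finite \<Rightarrow> real \<Rightarrow> real"
  assumes S: "finite S" and ab: "a \<le> b" and L: "L \<ge> 0" and M: "M \<ge> 0"
    and cont: "\<And>i. continuous_on {a..b} (z i)"
    and der: "\<And>i r. r \<in> {a<..<b} - S \<Longrightarrow> \<exists>d. (z i has_real_derivative d) (at r) \<and>
                 (z i r \<ge> 0 \<longrightarrow> d \<le> L * (\<Sum>j\<in>UNIV. max 0 (z j r - z i r)))"
    and start: "\<And>i. z i a \<le> M"
  shows "\<forall>i. \<forall>s\<in>{a..b}. z i s \<le> M"
proof (intro allI ballI)
  fix i0 s0 assume s0: "s0 \<in> {a..b}"
  show "z i0 s0 \<le> M"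
  proof (rule field_le_epsilon)
    fix e0 :: real assume e0: "e0 > 0"
    define e where "e = e0 / (1 + (b - a))"
    have e: "e > 0" unfolding e_def using e0 ab by auto
    define h where "h s = M + e * (1 + (s - a))" for s
    have hder: "(h has_real_derivative e) (at r)" for r
      unfolding h_def by (auto intro!: derivative_eq_intros)
    have hcont: "continuous_on {a..b} h" unfolding h_def by (intro continuous_intros)
    have "\<forall>i\<in>UNIV. \<forall>s\<in>{a..b}. z i s < h s"
    proof (rule barrier_principle[OF _ S ab _ hder])
      show "z i a < h a" for i using start[of i] e M unfolding h_def by simp
      fix s i assume s: "s \<in> {a<..b}" and eq: "z i s = h s" and all: "\<forall>j\<in>UNIV. z j s \<le> h s"
      have "0 \<le> e * (s - a)" using s e by simp
      then have "e \<le> h s" unfolding h_def using M by (simp add: algebra_simps)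
      then have zs: "z i s > 0" using eq e by auto
      define \<phi> where "\<phi> r = L * (\<Sum>j\<in>UNIV. max 0 (z j r - z i r))" for r
      have "\<phi> s = 0" unfolding \<phi>_def using all eq by (auto intro!: sum.neutral)
      moreover have "(\<phi> \<longlongrightarrow> \<phi> s) (at s within {a..b})"
        unfolding \<phi>_def using cont s by (intro tendsto_intros) (auto simp: continuous_on_def)
      ultimately have "eventually (\<lambda>r. \<phi> r < e) (at s within {a..b})"
        using order_tendstoD(2) e by metis
      moreover have "(z i \<longlongrightarrow> z i s) (at s within {a..b})"
        using cont s by (auto simp: continuous_on_def)
      then have "eventually (\<lambda>r. z i r > 0) (at s within {a..b})"
        using order_tendstoD(1) zs by blast
      ultimately have "eventually (\<lambda>r. \<phi> r < e \<and> z i r > 0) (at s within {a..b})"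
        by (rule eventually_conj)
      then obtain \<delta> where \<delta>: "\<delta> > 0" "\<forall>r. s - \<delta> < r \<longrightarrow> r < s \<longrightarrow> \<phi> r < e \<and> z i r > 0"
        using eventually_left_interval[of _ s a b] s by auto
      have "\<exists>d. (z i has_real_derivative d) (at r) \<and> d \<le> e"
        if r: "s - \<delta> < r" "r < s" "a < r" "r \<notin> S" for r
      proof -
        obtain d where d: "(z i has_real_derivative d) (at r)"
            "z i r \<ge> 0 \<longrightarrow> d \<le> L * (\<Sum>j\<in>UNIV. max 0 (z j r - z i r))"
          using der r s by fastforce
        then have "d \<le> \<phi> r" using \<delta>(2) r unfolding \<phi>_def by auto
        then show ?thesis using d(1) \<delta>(2) r by force
      qed
      then show "\<exists>\<delta>>0. \<forall>r. s - \<delta> < r \<longrightarrow> r < s \<longrightarrow> a < r \<longrightarrow> r \<notin> S \<longrightarrow>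
          (\<exists>d. (z i has_real_derivative d) (at r) \<and> d \<le> e)" using \<delta>(1) by blast
    qed (use cont in auto)
    then have "z i0 s0 < h s0" using s0 by blast
    also have "h s0 \<le> M + e * (1 + (b - a))"
      unfolding h_def using s0 e by (intro add_left_mono mult_left_mono) auto
    also have "\<dots> = M + e0" unfolding e_def using ab by (simp add: field_simps)
    finally show "z i0 s0 \<le> M + e0" by simp
  qed
qed

section \<open>Scalar consensus estimates\<close>

text \<open>Constants governing the contraction: with at most \<open>N\<close> followers and coupling weights in
  \<open>[alo, ahi]\<close>, the total follower coupling is at most \<open>K\<close>; a leader arc active for time \<open>\<tau>\<close>
  creates a relative gap \<open>gap_leader \<tau>\<close>, a follower arc transmits a fraction \<open>gap_follower \<tau>\<close>
  of an existing gap, and \<open>window_gain \<tau> W\<close> is the guaranteed gain per window of length \<open>W\<close>.\<close>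
locale gain_bounds =
  fixes alo ahi blo :: real and N :: nat
  assumes alo: "0 < alo" and alo_ahi: "alo \<le> ahi" and blo: "0 < blo" and N: "1 \<le> N"
begin

definition "K = real N * ahi"
definition "gap_leader \<tau> = blo / (K + blo) * (1 - exp (- (K + blo) * \<tau>))"
definition "gap_follower \<tau> = alo / K * (1 - exp (- K * \<tau>))"
definition "window_gain \<tau> W = exp (- 2 * K * W) * min (gap_follower \<tau>) (gap_leader \<tau>)"

lemma K_pos: "K > 0"
  unfolding K_def using alo alo_ahi N by simp

lemma alo_le_K: "alo \<le> K"
proof -
  have "ahi * 1 \<le> ahi * real N" using N alo alo_ahi by (intro mult_left_mono) auto
  then show ?thesis unfolding K_def using alo_ahi by (simp add: mult.commute)
qed

lemma relative_gap_bounds: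
  fixes p r \<tau> :: real
  assumes "0 < p" "p \<le> 1" "0 < r" "0 < \<tau>"
  shows "0 < p * (1 - exp (- r * \<tau>))" "p * (1 - exp (- r * \<tau>)) \<le> 1"
proof -
  have "0 < r * \<tau>" using assms by simp
  then have e: "0 < 1 - exp (- r * \<tau>)" "1 - exp (- r * \<tau>) \<le> 1" by auto
  show "0 < p * (1 - exp (- r * \<tau>))" using assms e by simp
  show "p * (1 - exp (- r * \<tau>)) \<le> 1" using assms e by (intro mult_le_one) auto
qed

lemma gap_leader_bounds: "\<tau> > 0 \<Longrightarrow> 0 < gap_leader \<tau> \<and> gap_leader \<tau> \<le> 1"
  unfolding gap_leader_def using relative_gap_bounds[of "blo / (K + blo)" "K + blo" \<tau>] K_pos blo
  by auto

lemma gap_follower_bounds: "\<tau> > 0 \<Longrightarrow> 0 < gap_follower \<tau> \<and> gap_follower \<tau> \<le> 1"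
  unfolding gap_follower_def using relative_gap_bounds[of "alo / K" K \<tau>] K_pos alo alo_le_K
  by auto

lemma window_gain_bounds:
  assumes t: "\<tau> > 0" and W: "W > 0"
  shows "0 < window_gain \<tau> W"
    "window_gain \<tau> W \<le> exp (- 2 * K * W) * gap_follower \<tau>"
    "window_gain \<tau> W \<le> exp (- 2 * K * W) * gap_leader \<tau>"
    "window_gain \<tau> W < 1"
    "window_gain \<tau> W \<le> exp (- K * W)"
proof -
  have m: "0 < min (gap_follower \<tau>) (gap_leader \<tau>)" "min (gap_follower \<tau>) (gap_leader \<tau>) \<le> 1"
    using gap_follower_bounds[OF t] gap_leader_bounds[OF t] by auto
  have KW: "K * W > 0" using K_pos W by simp
  show "0 < window_gain \<tau> W" unfolding window_gain_def using m by simp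
  show "window_gain \<tau> W \<le> exp (- 2 * K * W) * gap_follower \<tau>"
    "window_gain \<tau> W \<le> exp (- 2 * K * W) * gap_leader \<tau>"
    unfolding window_gain_def by (intro mult_left_mono; simp)+
  have "window_gain \<tau> W \<le> exp (- 2 * K * W)"
    unfolding window_gain_def using mult_left_mono[OF m(2), of "exp (- 2 * K * W)"] by simp
  moreover have "exp (- 2 * K * W) < 1" "exp (- 2 * K * W) \<le> exp (- K * W)" using KW by (simp_all add: mult.commute)
  ultimately show "window_gain \<tau> W < 1" "window_gain \<tau> W \<le> exp (- K * W)" by linarith+
qed

text \<open>Contraction factor of the hull distance over \<open>N\<close> consecutive windows.\<close>
definition "contraction_rate \<tau> W = 1 - window_gain \<tau> W ^ N"

lemma contraction_rate_bounds:
  assumes "\<tau> > 0" "W > 0"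
  shows "0 < contraction_rate \<tau> W" "contraction_rate \<tau> W < 1"
proof -
  have "0 < window_gain \<tau> W" "window_gain \<tau> W < 1" using window_gain_bounds[OF assms] by auto
  then have "0 < window_gain \<tau> W ^ N" "window_gain \<tau> W ^ N < 1"
    using N by (auto intro: power_less_one_iff[THEN iffD2])
  then show "0 < contraction_rate \<tau> W" "contraction_rate \<tau> W < 1"
    unfolding contraction_rate_def by auto
qed

end

definition drift :: "(real \<Rightarrow> ('n::finite, 'k::finite) digraph) \<Rightarrow> ('n \<Rightarrow> 'n \<Rightarrow> real \<Rightarrow> real)
   \<Rightarrow> ('n \<Rightarrow> 'k \<Rightarrow> real \<Rightarrow> real) \<Rightarrow> ('n \<Rightarrow> real \<Rightarrow> real) \<Rightarrow> 'n \<Rightarrow> real \<Rightarrow> real" where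
  "drift \<sigma> \<alpha> \<beta> z i r = (\<Sum>j\<in>{j. (Inl j, Inl i) \<in> \<sigma> r}. \<alpha> i j r * (z j r - z i r))
      - (\<Sum>j\<in>{j. (Inr j, Inl i) \<in> \<sigma> r}. \<beta> i j r) * z i r"

lemma weighted_diff_le:
  fixes al ah d m :: real
  assumes "al \<le> \<alpha>" "\<alpha> \<le> ah" "0 \<le> al" "d \<le> m" "0 \<le> m"
  shows "\<alpha> * d \<le> ah * m"
proof (cases "d \<ge> 0")
  case True
  then have "\<alpha> * d \<le> ah * d" using assms by (intro mult_right_mono) auto
  also have "\<dots> \<le> ah * m" using assms by (intro mult_left_mono) auto
  finally show ?thesis .
next
  case False
  then have "\<alpha> * d \<le> 0" using assms by (simp add: mult_nonneg_nonpos)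
  also have "0 \<le> ah * m" using assms by simp
  finally show ?thesis .
qed

lemma weighted_diff_le_gap:
  fixes al ah d m :: real
  assumes "al \<le> \<alpha>" "\<alpha> \<le> ah" "0 \<le> al" "d \<le> m - \<delta>" "0 \<le> m" "0 \<le> \<delta>"
  shows "\<alpha> * d \<le> ah * m - al * \<delta>"
proof (cases "d \<ge> 0")
  case True
  then have "\<alpha> * d \<le> ah * (m - \<delta>)"
    using assms mult_mono[of \<alpha> ah d "m - \<delta>"] by auto
  moreover have "al * \<delta> \<le> ah * \<delta>" using assms by (intro mult_right_mono) auto
  ultimately show ?thesis by (simp add: algebra_simps)
next
  case False
  then have "\<alpha> * d \<le> al * d" using assms by (intro mult_right_mono_neg) auto
  also have "\<dots> \<le> al * (m - \<delta>)" using assms by (intro mult_left_mono) auto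
  also have "\<dots> \<le> ah * m - al * \<delta>"
    using mult_right_mono[of al ah m] assms by (simp add: algebra_simps)
  finally show ?thesis .
qed

locale weighted_drift = gain_bounds alo ahi blo "CARD('n)" for alo ahi blo +
  fixes \<alpha> :: "'n::finite \<Rightarrow> 'n \<Rightarrow> real \<Rightarrow> real" and \<beta> :: "'n \<Rightarrow> 'k::finite \<Rightarrow> real \<Rightarrow> real"
  assumes \<alpha>_bounds: "\<And>i j r. alo \<le> \<alpha> i j r \<and> \<alpha> i j r \<le> ahi"
    and \<beta>_bound: "\<And>i j r. blo \<le> \<beta> i j r"
begin

lemma follower_part_le_excess:
  fixes z :: "'n \<Rightarrow> real \<Rightarrow> real"
  shows "(\<Sum>j\<in>{j. (Inl j, Inl i) \<in> \<sigma> r}. \<alpha> i j r * (z j r - z i r))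
     \<le> ahi * (\<Sum>j\<in>UNIV. max 0 (z j r - z i r))"
proof -
  have "(\<Sum>j\<in>{j. (Inl j, Inl i) \<in> \<sigma> r}. \<alpha> i j r * (z j r - z i r))
      \<le> (\<Sum>j\<in>{j. (Inl j, Inl i) \<in> \<sigma> r}. ahi * max 0 (z j r - z i r))"
    using \<alpha>_bounds alo by (intro sum_mono weighted_diff_le[where al=alo]) (auto intro: order.trans)
  also have "\<dots> \<le> (\<Sum>j\<in>UNIV. ahi * max 0 (z j r - z i r))"
    using alo alo_ahi by (intro sum_mono2) auto
  finally show ?thesis by (simp add: sum_distrib_left)
qed

lemma leader_weight_nonneg: "0 \<le> (\<Sum>j\<in>{j. (Inr j, Inl i) \<in> \<sigma> r}. \<beta> i j r)"
  using \<beta>_bound blo by (intro sum_nonneg) (auto intro: order.trans[OF less_imp_le])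

lemma leader_weight_ge:
  assumes "(Inr l, Inl i) \<in> \<sigma> r"
  shows "blo \<le> (\<Sum>j\<in>{j. (Inr j, Inl i) \<in> \<sigma> r}. \<beta> i j r)"
proof -
  have "blo \<le> \<beta> i l r" by (rule \<beta>_bound)
  also have "\<dots> \<le> (\<Sum>j\<in>{j. (Inr j, Inl i) \<in> \<sigma> r}. \<beta> i j r)"
    using assms \<beta>_bound blo by (intro member_le_sum) (auto intro: order.trans[OF less_imp_le])
  finally show ?thesis .
qed

lemma drift_le_excess:
  fixes z :: "'n \<Rightarrow> real \<Rightarrow> real"
  assumes "z i r \<ge> 0"
  shows "drift \<sigma> \<alpha> \<beta> z i r \<le> ahi * (\<Sum>j\<in>UNIV. max 0 (z j r - z i r))"
  using follower_part_le_excess[where \<sigma>=\<sigma> and i=i and r=r and z=z] leader_weight_nonneg[where \<sigma>=\<sigma> and i=i and r=r] assms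
  unfolding drift_def by (smt (verit) mult_nonneg_nonneg)

lemma excess_le_K:
  fixes z :: "'n \<Rightarrow> real \<Rightarrow> real"
  assumes "\<And>j. z j r \<le> M"
  shows "ahi * (\<Sum>j\<in>UNIV. max 0 (z j r - z i r)) \<le> K * (M - z i r)"
proof -
  have "max 0 (z j r - z i r) \<le> M - z i r" for j using assms[of j] assms[of i] by auto
  then have "(\<Sum>j\<in>UNIV. max 0 (z j r - z i r)) \<le> (\<Sum>j\<in>(UNIV::'n set). M - z i r)"
    by (rule sum_mono)
  then have "ahi * (\<Sum>j\<in>UNIV. max 0 (z j r - z i r)) \<le> ahi * (real CARD('n) * (M - z i r))"
    using alo alo_ahi by (intro mult_left_mono) auto
  then show ?thesis unfolding K_def by (simp add: algebra_simps)
qed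

lemma drift_le_K:
  fixes z :: "'n \<Rightarrow> real \<Rightarrow> real"
  assumes "z i r \<ge> 0" "\<And>j. z j r \<le> M"
  shows "drift \<sigma> \<alpha> \<beta> z i r \<le> K * (M - z i r)"
  using drift_le_excess[where \<sigma>=\<sigma> and z=z and i=i and r=r, OF assms(1)] excess_le_K[where z=z and r=r and M=M and i=i, OF assms(2)] by linarith

lemma drift_le_leader:
  fixes z :: "'n \<Rightarrow> real \<Rightarrow> real"
  assumes "z i r \<ge> 0" "\<And>j. z j r \<le> M" "(Inr l, Inl i) \<in> \<sigma> r"
  shows "drift \<sigma> \<alpha> \<beta> z i r \<le> K * (M - z i r) - blo * z i r"
proof -
  have "blo * z i r \<le> (\<Sum>j\<in>{j. (Inr j, Inl i) \<in> \<sigma> r}. \<beta> i j r) * z i r"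
    using leader_weight_ge[where l=l and i=i and \<sigma>=\<sigma> and r=r] assms(1,3) by (intro mult_right_mono) auto
  moreover have "(\<Sum>j\<in>{j. (Inl j, Inl i) \<in> \<sigma> r}. \<alpha> i j r * (z j r - z i r)) \<le> K * (M - z i r)"
    using follower_part_le_excess[where \<sigma>=\<sigma> and i=i and r=r and z=z] excess_le_K[where z=z and r=r and M=M and i=i, OF assms(2)] by linarith
  ultimately show ?thesis unfolding drift_def by linarith
qed

lemma drift_le_follower:
  fixes z :: "'n \<Rightarrow> real \<Rightarrow> real"
  assumes "z i r \<ge> 0" "\<And>j. z j r \<le> M" "(Inl k, Inl i) \<in> \<sigma> r" "z k r \<le> M - \<delta> * M"
    and "0 \<le> \<delta>" "0 \<le> M"
  shows "drift \<sigma> \<alpha> \<beta> z i r \<le> K * (M - z i r) - alo * (\<delta> * M)"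
proof -
  let ?A = "{j. (Inl j, Inl i) \<in> \<sigma> r}"
  have kA: "k \<in> ?A" using assms by simp
  have Mz: "0 \<le> M - z i r" using assms(2)[of i] by simp
  have "(\<Sum>j\<in>?A. \<alpha> i j r * (z j r - z i r))
      = \<alpha> i k r * (z k r - z i r) + (\<Sum>j\<in>?A - {k}. \<alpha> i j r * (z j r - z i r))"
    using kA by (simp add: sum.remove)
  also have "\<dots> \<le> (ahi * (M - z i r) - alo * (\<delta> * M)) + (\<Sum>j\<in>?A - {k}. ahi * (M - z i r))"
  proof (intro add_mono sum_mono)
    have "z k r - z i r \<le> (M - z i r) - \<delta> * M" using assms(4) by simp
    moreover have "0 \<le> \<delta> * M" using assms(5,6) by simp
    ultimately show "\<alpha> i k r * (z k r - z i r) \<le> ahi * (M - z i r) - alo * (\<delta> * M)"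
      using \<alpha>_bounds[of i k r] alo Mz by (intro weighted_diff_le_gap) auto
    fix j assume "j \<in> ?A - {k}"
    show "\<alpha> i j r * (z j r - z i r) \<le> ahi * (M - z i r)"
      using \<alpha>_bounds[of i j r] alo assms Mz by (intro weighted_diff_le[where al=alo]) auto
  qed
  also have "\<dots> = ahi * (M - z i r) * (1 + real (card (?A - {k}))) - alo * (\<delta> * M)"
    by (simp add: algebra_simps)
  also have "\<dots> \<le> ahi * (M - z i r) * real CARD('n) - alo * (\<delta> * M)"
  proof -
    have "card (?A - {k}) < card (UNIV :: 'n set)" by (rule psubset_card_mono) auto
    then have "1 + real (card (?A - {k})) \<le> real CARD('n)" by linarith
    moreover have "0 \<le> ahi * (M - z i r)" using Mz alo alo_ahi by simp
    ultimately show ?thesis by (simp add: mult_left_mono)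
  qed
  finally have "(\<Sum>j\<in>?A. \<alpha> i j r * (z j r - z i r)) \<le> K * (M - z i r) - alo * (\<delta> * M)"
    unfolding K_def by (simp add: algebra_simps)
  moreover have "0 \<le> (\<Sum>j\<in>{j. (Inr j, Inl i) \<in> \<sigma> r}. \<beta> i j r) * z i r"
    using leader_weight_nonneg[where \<sigma>=\<sigma> and i=i and r=r] assms(1) by simp
  ultimately show ?thesis unfolding drift_def by linarith
qed

definition sub_drift :: "(real \<Rightarrow> ('n, 'k) digraph) \<Rightarrow> ('n \<Rightarrow> real \<Rightarrow> real) \<Rightarrow> real set
    \<Rightarrow> real \<Rightarrow> real \<Rightarrow> bool" where
  "sub_drift \<sigma> z S a b \<longleftrightarrow> (\<forall>i. continuous_on {a..b} (z i)) \<and>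
     (\<forall>i. \<forall>r\<in>{a<..<b} - S. \<exists>d. (z i has_real_derivative d) (at r) \<and> d \<le> drift \<sigma> \<alpha> \<beta> z i r)"

lemma sub_drift_mono:
  assumes sub: "sub_drift \<sigma> z S a b" and "a \<le> a'" "b' \<le> b"
  shows "sub_drift \<sigma> z S a' b'"
  unfolding sub_drift_def
proof (intro conjI allI ballI)
  have "{a'..b'} \<subseteq> {a..b}" using assms(2,3) by auto
  then show "continuous_on {a'..b'} (z i)" for i
    using sub unfolding sub_drift_def by (blast intro: continuous_on_subset)
  fix i r assume "r \<in> {a'<..<b'} - S"
  then have "r \<in> {a<..<b} - S" using assms(2,3) by auto
  then show "\<exists>d. (z i has_real_derivative d) (at r) \<and> d \<le> drift \<sigma> \<alpha> \<beta> z i r"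
    using sub unfolding sub_drift_def by blast
qed

lemma sub_drift_deriv:
  assumes "sub_drift \<sigma> z S a b" "r \<in> {a<..<b} - S"
  obtains d where "(z i has_real_derivative d) (at r)" "d \<le> drift \<sigma> \<alpha> \<beta> z i r"
  using assms unfolding sub_drift_def by blast

lemma upper_bound_persists:
  assumes S: "finite S" and ab: "a \<le> b" and M: "M \<ge> 0" and sub: "sub_drift \<sigma> z S a b"
    and start: "\<And>i. z i a \<le> M"
  shows "\<forall>i. \<forall>s\<in>{a..b}. z i s \<le> M"
proof (rule max_principle[where z=z, OF S ab _ M _ _ start])
  show "0 \<le> ahi" using alo alo_ahi by simp
  show "continuous_on {a..b} (z i)" for i using sub unfolding sub_drift_def by blast
  fix i r assume r: "r \<in> {a<..<b} - S"
  obtain d where "(z i has_real_derivative d) (at r)" "d \<le> drift \<sigma> \<alpha> \<beta> z i r"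
    using sub_drift_deriv[OF sub r] .
  then show "\<exists>d. (z i has_real_derivative d) (at r) \<and>
      (0 \<le> z i r \<longrightarrow> d \<le> ahi * (\<Sum>j\<in>UNIV. max 0 (z j r - z i r)))"
    using drift_le_excess[where \<sigma>=\<sigma> and z=z and i=i and r=r] by force
qed

lemma gap_persists:
  assumes S: "finite S" and ab: "a \<le> b" and M: "M \<ge> 0" and sub: "sub_drift \<sigma> z S a b"
    and bound: "\<And>j s. s \<in> {a..b} \<Longrightarrow> z j s \<le> M"
    and start: "z i a \<le> M - \<delta> * M" and \<delta>: "0 \<le> \<delta>" "\<delta> \<le> 1"
  shows "\<forall>s\<in>{a..b}. z i s \<le> M - \<delta> * M * exp (- K * (s - a))"
proof -
  have "\<forall>s\<in>{a..b}. z i s \<le> M + (- (\<delta> * M)) * exp (- K * (s - a))"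
  proof (rule linear_comparison[OF S ab _ M])
    show "0 \<le> K" using K_pos by simp
    show "0 \<le> M + - (\<delta> * M)" using mult_right_mono[OF \<delta>(2) M] by simp
    show "continuous_on {a..b} (z i)" using sub unfolding sub_drift_def by blast
    show "z i a \<le> M + - (\<delta> * M)" using start by simp
    fix r assume r: "r \<in> {a<..<b} - S"
    obtain d where "(z i has_real_derivative d) (at r)" "d \<le> drift \<sigma> \<alpha> \<beta> z i r"
      using sub_drift_deriv[OF sub r] .
    then show "\<exists>d. (z i has_real_derivative d) (at r) \<and> (0 \<le> z i r \<longrightarrow> d \<le> K * (M - z i r))"
      using drift_le_K[where \<sigma>=\<sigma> and z=z and i=i and r=r and M=M] bound r by force
  qed
  then show ?thesis by simp
qed

lemma leader_creates_gap:
  assumes S: "finite S" and ab: "a \<le> b" and M: "M \<ge> 0" and sub: "sub_drift \<sigma> z S a b"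
    and bound: "\<And>j s. s \<in> {a..b} \<Longrightarrow> z j s \<le> M"
    and arc: "\<And>r. r \<in> {a<..<b} \<Longrightarrow> (Inr l, Inl i) \<in> \<sigma> r"
  shows "z i b \<le> M - gap_leader (b - a) * M"
proof -
  have Kb: "K + blo > 0" using K_pos blo by simp
  define A where "A = K * M / (K + blo)"
  have A0: "A \<ge> 0" unfolding A_def using K_pos M Kb by simp
  have "\<forall>s\<in>{a..b}. z i s \<le> A + (M - A) * exp (- (K + blo) * (s - a))"
  proof (rule linear_comparison[OF S ab _ A0])
    show "0 \<le> K + blo" "0 \<le> A + (M - A)" using Kb M by simp_all
    show "continuous_on {a..b} (z i)" using sub unfolding sub_drift_def by blast
    show "z i a \<le> A + (M - A)" using bound[of a i] ab by simp
    fix r assume r: "r \<in> {a<..<b} - S"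
    obtain d where d: "(z i has_real_derivative d) (at r)" "d \<le> drift \<sigma> \<alpha> \<beta> z i r"
      using sub_drift_deriv[OF sub r] .
    have "0 \<le> z i r \<Longrightarrow> drift \<sigma> \<alpha> \<beta> z i r \<le> K * (M - z i r) - blo * z i r"
      by (rule drift_le_leader) (use bound r arc in auto)
    moreover have "K * (M - z i r) - blo * z i r = (K + blo) * (A - z i r)"
      unfolding A_def using Kb by (simp add: field_simps)
    ultimately show "\<exists>d. (z i has_real_derivative d) (at r) \<and> (0 \<le> z i r \<longrightarrow> d \<le> (K + blo) * (A - z i r))"
      using d by (intro exI[of _ d]) auto
  qed
  then have "z i b \<le> A + (M - A) * exp (- (K + blo) * (b - a))" using ab by auto
  also have "\<dots> = M - gap_leader (b - a) * M"
  proof -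
    define q where "q = exp (- (K + blo) * (b - a))"
    have "M - A = blo * M / (K + blo)" unfolding A_def using Kb by (simp add: field_simps)
    moreover have "A + (M - A) * q = M - (M - A) * (1 - q)" by (simp add: algebra_simps)
    ultimately have "A + (M - A) * q = M - blo / (K + blo) * (1 - q) * M" by simp
    then show ?thesis unfolding gap_leader_def q_def by simp
  qed
  finally show ?thesis .
qed

lemma follower_transmits_gap:
  assumes S: "finite S" and ab: "a \<le> b" and M: "M \<ge> 0" and sub: "sub_drift \<sigma> z S a b"
    and bound: "\<And>j s. s \<in> {a..b} \<Longrightarrow> z j s \<le> M"
    and arc: "\<And>r. r \<in> {a<..<b} \<Longrightarrow> (Inl k, Inl i) \<in> \<sigma> r \<and> z k r \<le> M - \<delta> * M"
    and \<delta>: "0 \<le> \<delta>" "\<delta> \<le> 1"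
  shows "z i b \<le> M - \<delta> * gap_follower (b - a) * M"
proof -
  define A where "A = M - alo * (\<delta> * M) / K"
  have "alo * (\<delta> * M) \<le> K * M"
    using mult_mono[OF alo_le_K mult_left_le_one_le[OF M \<delta>]] K_pos alo M \<delta> by simp
  then have A0: "A \<ge> 0" unfolding A_def using K_pos by (simp add: field_simps)
  have "\<forall>s\<in>{a..b}. z i s \<le> A + (M - A) * exp (- K * (s - a))"
  proof (rule linear_comparison[OF S ab _ A0])
    show "0 \<le> K" "0 \<le> A + (M - A)" using K_pos M by simp_all
    show "continuous_on {a..b} (z i)" using sub unfolding sub_drift_def by blast
    show "z i a \<le> A + (M - A)" using bound[of a i] ab by simp
    fix r assume r: "r \<in> {a<..<b} - S"
    obtain d where d: "(z i has_real_derivative d) (at r)" "d \<le> drift \<sigma> \<alpha> \<beta> z i r"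
      using sub_drift_deriv[OF sub r] .
    have "0 \<le> z i r \<Longrightarrow> drift \<sigma> \<alpha> \<beta> z i r \<le> K * (M - z i r) - alo * (\<delta> * M)"
      by (rule drift_le_follower[where k=k]) (use bound r arc \<delta> M in auto)
    moreover have "K * (M - z i r) - alo * (\<delta> * M) = K * (A - z i r)"
      unfolding A_def using K_pos by (simp add: field_simps)
    ultimately show "\<exists>d. (z i has_real_derivative d) (at r) \<and> (0 \<le> z i r \<longrightarrow> d \<le> K * (A - z i r))"
      using d by (intro exI[of _ d]) auto
  qed
  then have "z i b \<le> A + (M - A) * exp (- K * (b - a))" using ab by auto
  also have "\<dots> = M - \<delta> * gap_follower (b - a) * M"
  proof -
    define q where "q = exp (- K * (b - a))"
    have "M - A = alo * (\<delta> * M) / K" unfolding A_def by simp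
    moreover have "A + (M - A) * q = M - (M - A) * (1 - q)" by (simp add: algebra_simps)
    ultimately have "A + (M - A) * q = M - \<delta> * (alo / K * (1 - q)) * M" by simp
    then show ?thesis unfolding gap_follower_def q_def by simp
  qed
  finally show ?thesis .
qed

end

definition fed_during :: "(real \<Rightarrow> ('n, 'k) digraph) \<Rightarrow> 'n set \<Rightarrow> 'n \<Rightarrow> real \<Rightarrow> real \<Rightarrow> bool" where
  "fed_during \<sigma> G i s \<tau> \<longleftrightarrow> (\<exists>l. \<forall>r\<in>{s<..<s+\<tau>}. (Inr l, Inl i) \<in> \<sigma> r) \<or>
     (\<exists>k\<in>G. \<forall>r\<in>{s<..<s+\<tau>}. (Inl k, Inl i) \<in> \<sigma> r)"

definition spreading :: "(real \<Rightarrow> ('n, 'k) digraph) \<Rightarrow> real \<Rightarrow> real \<Rightarrow> real \<Rightarrow> bool" where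
  "spreading \<sigma> \<tau> W t0 \<longleftrightarrow> (\<forall>t\<ge>t0. \<forall>G. G \<noteq> UNIV \<longrightarrow>
     (\<exists>i. i \<notin> G \<and> (\<exists>s. t \<le> s \<and> s + \<tau> \<le> t + W \<and> fed_during \<sigma> G i s \<tau>)))"

lemma gap_weaken: "y \<le> x \<Longrightarrow> 0 \<le> (M::real) \<Longrightarrow> z \<le> M - x * M \<Longrightarrow> z \<le> M - y * M"
  using mult_right_mono[of y x M] by linarith

context weighted_drift
begin

lemma gap_on_window:
  assumes S: "finite S" and ab: "a \<le> b" "b - a \<le> W" and M: "M \<ge> 0" and sub: "sub_drift \<sigma> z S a b"
    and bound: "\<And>j s. s \<in> {a..b} \<Longrightarrow> z j s \<le> M"
    and start: "z g a \<le> M - q * M" and q: "0 \<le> q" "q \<le> 1" and s: "s \<in> {a..b}"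
  shows "z g s \<le> M - q * exp (- K * W) * M"
proof -
  have "z g s \<le> M - q * M * exp (- K * (s - a))"
    using gap_persists[OF S ab(1) M sub bound start q] s by blast
  moreover have "exp (- K * W) \<le> exp (- K * (s - a))" using s ab K_pos by (simp add: mult_left_mono)
  then have "q * M * exp (- K * W) \<le> q * M * exp (- K * (s - a))" using q M by (intro mult_left_mono) auto
  ultimately show ?thesis by (simp add: algebra_simps)
qed

lemma gap_entry:
  assumes S: "finite S" and \<tau>: "\<tau> > 0" "\<tau> \<le> W" and M: "M \<ge> 0"
    and sub: "sub_drift \<sigma> z S a (a + W)" and bound: "\<And>j s. s \<in> {a..a + W} \<Longrightarrow> z j s \<le> M"
    and G: "\<And>g. g \<in> G \<Longrightarrow> z g a \<le> M - q * M" and q: "0 \<le> q" "q \<le> 1"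
    and s: "a \<le> s" "s + \<tau> \<le> a + W" and fed: "fed_during \<sigma> G i s \<tau>"
  shows "\<exists>\<delta>. 0 \<le> \<delta> \<and> \<delta> \<le> 1 \<and> q * window_gain \<tau> W \<le> \<delta> * exp (- K * W) \<and> z i (s + \<tau>) \<le> M - \<delta> * M"
proof -
  have W: "W > 0" using \<tau> by simp
  note gain = window_gain_bounds[OF \<tau>(1) W]
  have sub': "sub_drift \<sigma> z S s (s + \<tau>)" by (rule sub_drift_mono[OF sub]) (use s \<tau> in auto)
  have bound': "\<And>j r. r \<in> {s..s + \<tau>} \<Longrightarrow> z j r \<le> M" using bound s \<tau> by auto
  have eKW: "exp (- 2 * K * W) = exp (- K * W) * exp (- K * W)"
    by (subst mult_exp_exp) (rule arg_cong[where f=exp], simp)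
  from fed consider (leader) l where "\<forall>r\<in>{s<..<s+\<tau>}. (Inr l, Inl i) \<in> \<sigma> r"
    | (follower) k where "k \<in> G" "\<forall>r\<in>{s<..<s+\<tau>}. (Inl k, Inl i) \<in> \<sigma> r"
    unfolding fed_during_def by blast
  then show ?thesis
  proof cases
    case leader
    have "z i (s + \<tau>) \<le> M - gap_leader (s + \<tau> - s) * M"
      by (rule leader_creates_gap[OF S _ M sub' bound']) (use \<tau> leader in auto)
    moreover have "q * window_gain \<tau> W \<le> gap_leader \<tau> * exp (- K * W)"
    proof -
      have "q * window_gain \<tau> W \<le> window_gain \<tau> W" using q gain by (simp add: mult_left_le_one_le)
      also have "\<dots> \<le> exp (- 2 * K * W) * gap_leader \<tau>" by (rule gain(3))
      also have "\<dots> \<le> exp (- K * W) * gap_leader \<tau>"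
        using K_pos W gap_leader_bounds[OF \<tau>(1)] by (intro mult_right_mono) auto
      finally show ?thesis by (simp add: mult.commute)
    qed
    ultimately show ?thesis using gap_leader_bounds[OF \<tau>(1)]
      by (intro exI[of _ "gap_leader \<tau>"]) auto
  next
    case follower
    define \<delta> where "\<delta> = q * exp (- K * W)"
    have \<delta>: "0 \<le> \<delta>" "\<delta> \<le> 1" unfolding \<delta>_def using q K_pos W by (auto intro: mult_le_one)
    have "z i (s + \<tau>) \<le> M - \<delta> * gap_follower (s + \<tau> - s) * M"
    proof (rule follower_transmits_gap[OF S _ M sub' bound' _ \<delta>, where k=k])
      fix r assume "r \<in> {s<..<s + \<tau>}"
      then show "(Inl k, Inl i) \<in> \<sigma> r \<and> z k r \<le> M - \<delta> * M"
        using follower gap_on_window[OF S _ _ M sub bound G[OF follower(1)] q, where W=W and s=r] s \<tau>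
        unfolding \<delta>_def by auto
    qed (use \<tau> in auto)
    moreover have "q * window_gain \<tau> W \<le> (\<delta> * gap_follower \<tau>) * exp (- K * W)"
      using mult_left_mono[OF gain(2) q(1)] unfolding \<delta>_def eKW by (simp add: algebra_simps)
    moreover have "0 \<le> \<delta> * gap_follower \<tau>" "\<delta> * gap_follower \<tau> \<le> 1"
      using \<delta> gap_follower_bounds[OF \<tau>(1)] by (auto intro: mult_le_one)
    ultimately show ?thesis by auto
  qed
qed

lemma gap_new_member:
  assumes S: "finite S" and \<tau>: "\<tau> > 0" "\<tau> \<le> W" and M: "M \<ge> 0"
    and sub: "sub_drift \<sigma> z S a (a + W)" and bound: "\<And>j s. s \<in> {a..a + W} \<Longrightarrow> z j s \<le> M"
    and G: "\<And>g. g \<in> G \<Longrightarrow> z g a \<le> M - q * M" and q: "0 \<le> q" "q \<le> 1"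
    and s: "a \<le> s" "s + \<tau> \<le> a + W" and fed: "fed_during \<sigma> G i s \<tau>"
  shows "z i (a + W) \<le> M - q * window_gain \<tau> W * M"
proof -
  obtain \<delta> where \<delta>: "0 \<le> \<delta>" "\<delta> \<le> 1" "q * window_gain \<tau> W \<le> \<delta> * exp (- K * W)"
    and entry: "z i (s + \<tau>) \<le> M - \<delta> * M"
    using gap_entry[OF S \<tau> M sub bound G q s fed] by blast
  have "z i (a + W) \<le> M - \<delta> * exp (- K * W) * M"
  proof (rule gap_on_window[where z=z and g=i, OF S _ _ M _ _ entry \<delta>(1,2)])
    show "sub_drift \<sigma> z S (s + \<tau>) (a + W)" by (rule sub_drift_mono[OF sub]) (use s \<tau> in auto)
    show "\<And>j r. r \<in> {s + \<tau>..a + W} \<Longrightarrow> z j r \<le> M" using bound s \<tau> by auto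
  qed (use s \<tau> in auto)
  then show ?thesis using gap_weaken[OF \<delta>(3) M] by simp
qed

lemma gap_old_member:
  assumes S: "finite S" and \<tau>: "\<tau> > 0" "\<tau> \<le> W" and M: "M \<ge> 0"
    and sub: "sub_drift \<sigma> z S a (a + W)" and bound: "\<And>j s. s \<in> {a..a + W} \<Longrightarrow> z j s \<le> M"
    and g: "z g a \<le> M - q * M" and q: "0 \<le> q" "q \<le> 1"
  shows "z g (a + W) \<le> M - q * window_gain \<tau> W * M"
proof -
  have W: "W > 0" using \<tau> by simp
  have "z g (a + W) \<le> M - q * exp (- K * W) * M"
    by (rule gap_on_window[OF S _ _ M sub bound g q]) (use W in auto)
  moreover have "q * window_gain \<tau> W \<le> q * exp (- K * W)"
    by (rule mult_left_mono[OF window_gain_bounds(5)[OF \<tau>(1) W] q(1)])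
  ultimately show ?thesis using gap_weaken[OF _ M] by blast
qed

lemma gap_spreads:
  assumes S: "finite S" and \<tau>: "\<tau> > 0" "\<tau> \<le> W" and M: "M \<ge> 0"
    and sub: "sub_drift \<sigma> z S a (a + W)" and bound: "\<And>j s. s \<in> {a..a + W} \<Longrightarrow> z j s \<le> M"
    and G: "\<And>g. g \<in> G \<Longrightarrow> z g a \<le> M - q * M" and q: "0 \<le> q" "q \<le> 1"
    and spread: "spreading \<sigma> \<tau> W t0" "t0 \<le> a"
  shows "\<exists>G'. min (Suc (card G)) CARD('n) \<le> card G' \<and>
    (\<forall>i\<in>G'. z i (a + W) \<le> M - q * window_gain \<tau> W * M)"
proof -
  have old: "\<forall>g\<in>G. z g (a + W) \<le> M - q * window_gain \<tau> W * M"
    using gap_old_member[OF S \<tau> M sub bound G q] by blast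
  show ?thesis
  proof (cases "G = UNIV")
    case True
    then show ?thesis using old by (intro exI[of _ G]) auto
  next
    case False
    obtain i s where i: "i \<notin> G" "a \<le> s" "s + \<tau> \<le> a + W" "fed_during \<sigma> G i s \<tau>"
      using spread False unfolding spreading_def by blast
    have "z i (a + W) \<le> M - q * window_gain \<tau> W * M"
      by (rule gap_new_member[OF S \<tau> M sub bound G q i(2-4)])
    then show ?thesis using old i(1) by (intro exI[of _ "insert i G"]) auto
  qed
qed

text \<open>Contraction over \<open>CARD('n)\<close> consecutive windows: after \<open>k\<close> windows at least \<open>k\<close> followers
  have the relative gap \<open>window_gain\<^sup>k\<close>, so finally all followers are a fixed fraction below
  the initial common bound \<open>M\<close>.\<close>
lemma gap_after_windows:
  assumes S: "finite S" and \<tau>: "\<tau> > 0" "\<tau> \<le> W" and spread: "spreading \<sigma> \<tau> W t0" and M: "M \<ge> 0"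
    and sub: "sub_drift \<sigma> z S t0 (t0 + real CARD('n) * W)"
    and start: "\<And>i. z i t0 \<le> M"
  shows "\<forall>i. z i (t0 + real CARD('n) * W) \<le> M - window_gain \<tau> W ^ CARD('n) * M"
proof -
  define E where "E = t0 + real CARD('n) * W"
  define \<kappa> where "\<kappa> = window_gain \<tau> W"
  have W: "W > 0" using \<tau> by simp
  have bound: "\<And>j s. s \<in> {t0..E} \<Longrightarrow> z j s \<le> M"
    using upper_bound_persists[OF S _ M sub start] W unfolding E_def by auto
  have \<kappa>: "0 \<le> \<kappa> ^ k" "\<kappa> ^ k \<le> 1" for k
    using window_gain_bounds[OF \<tau>(1) W] unfolding \<kappa>_def by (auto intro: power_le_one)
  have "\<exists>G. k \<le> card G \<and> (\<forall>i\<in>G. z i (t0 + real k * W) \<le> M - \<kappa> ^ k * M)" if "k \<le> CARD('n)" for k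
    using that
  proof (induction k)
    case 0 show ?case by (intro exI[of _ "{}"]) auto
  next
    case (Suc k)
    obtain G where G: "k \<le> card G" "\<forall>i\<in>G. z i (t0 + real k * W) \<le> M - \<kappa> ^ k * M"
      using Suc by auto
    define a where "a = t0 + real k * W"
    have a: "t0 \<le> a" "a + W \<le> E" "t0 + real (Suc k) * W = a + W"
      using W Suc.prems mult_right_mono[of "real (Suc k)" "real CARD('n)" W]
      unfolding a_def E_def by (auto simp: algebra_simps)
    have sub_a: "sub_drift \<sigma> z S a (a + W)"
      by (rule sub_drift_mono[OF sub]) (use a in \<open>auto simp: E_def\<close>)
    have bound_a: "\<And>j s. s \<in> {a..a + W} \<Longrightarrow> z j s \<le> M" using bound a by auto
    have G_a: "\<And>g. g \<in> G \<Longrightarrow> z g a \<le> M - \<kappa> ^ k * M" using G(2) unfolding a_def by blast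
    obtain G' where "min (Suc (card G)) CARD('n) \<le> card G'"
      "\<forall>i\<in>G'. z i (a + W) \<le> M - \<kappa> ^ k * window_gain \<tau> W * M"
      using gap_spreads[OF S \<tau> M sub_a bound_a G_a \<kappa> spread a(1)] by blast
    then show ?case using G(1) Suc.prems a(3) unfolding \<kappa>_def by (intro exI[of _ G']) (auto simp: mult.commute)
  qed
  from this[of "CARD('n)"] obtain G where
    G: "CARD('n) \<le> card G" "\<forall>i\<in>G. z i (t0 + real CARD('n) * W) \<le> M - \<kappa> ^ CARD('n) * M"
    by auto
  have "G = UNIV" using G(1) by (metis card_seteq finite subset_UNIV)
  then show ?thesis using G(2) unfolding \<kappa>_def by auto
qed

end

section \<open>Switching signals and uniform joint connectivity\<close>

locale dwell =
  fixes \<sigma> :: "real \<Rightarrow> 'g" and tauD :: real and ts :: "nat \<Rightarrow> real"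
  assumes tauD: "tauD > 0" and ts0: "0 < ts 0" and tsgap: "\<And>m. ts m + tauD \<le> ts (Suc m)"
    and c0: "\<And>t. t \<in> {0..<ts 0} \<Longrightarrow> \<sigma> t = \<sigma> 0"
    and cm: "\<And>m t. t \<in> {ts m..<ts (Suc m)} \<Longrightarrow> \<sigma> t = \<sigma> (ts m)"
begin

text \<open>The switching instants grow at least linearly, so each bounded interval contains only
  finitely many of them; away from them the signal is locally constant.\<close>
lemma ts_ge: "ts m \<ge> ts 0 + real m * tauD"
proof (induction m)
  case (Suc m) then show ?case using tsgap[of m] by (simp add: algebra_simps)
qed simp

lemma between_instants: assumes "r \<ge> 0" shows "r < ts 0 \<or> (\<exists>m. ts m \<le> r \<and> r < ts (Suc m))"
proof (cases "r < ts 0")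
  case False
  obtain N :: nat where N: "r / tauD < real N" using reals_Archimedean2 by blast
  have "r < ts N" using ts_ge[of N] N tauD ts0 by (simp add: field_simps)
  then have ex: "\<exists>m. r < ts m" by blast
  define m where "m = (LEAST m. r < ts m)"
  have m: "r < ts m" unfolding m_def using LeastI_ex[OF ex] .
  have "m \<noteq> 0" using False m by (cases m) auto
  then obtain m' where m': "m = Suc m'" by (cases m) auto
  have "\<not> r < ts m'" using not_less_Least[of m' "\<lambda>m. r < ts m"] m' unfolding m_def by auto
  then show ?thesis using m m' by force
qed simp

lemma finite_instants: "finite (ts ` {m. ts m \<le> b})"
proof -
  obtain N :: nat where N: "b / tauD < real N" using reals_Archimedean2 by blast
  have "{m. ts m \<le> b} \<subseteq> {..<N}"
  proof
    fix m assume "m \<in> {m. ts m \<le> b}"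
    then have "ts 0 + real m * tauD \<le> b" using ts_ge[of m] by simp
    moreover have "b < real N * tauD" using N tauD by (simp add: field_simps)
    ultimately have "real m * tauD < real N * tauD" using ts0 by linarith
    then show "m \<in> {..<N}" using tauD by simp
  qed
  then show ?thesis by (meson finite_imageI finite_lessThan finite_subset)
qed

lemma locally_constant:
  assumes r: "r > 0" "r \<notin> range ts"
  shows "\<exists>\<delta>>0. \<forall>r'. \<bar>r' - r\<bar> < \<delta> \<longrightarrow> \<sigma> r' = \<sigma> r"
proof -
  from between_instants[of r] r consider "r < ts 0" | m where "ts m \<le> r" "r < ts (Suc m)" by force
  then show ?thesis
  proof cases
    case 1
    show ?thesis
      by (intro exI[of _ "min r (ts 0 - r)"]) (use 1 r in \<open>auto intro!: trans[OF c0 c0[symmetric]] simp: abs_less_iff\<close>)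
  next
    case 2
    then have h: "ts m \<le> r" "r < ts (Suc m)" .
    have "ts m \<noteq> r" using r by auto
    then have lt: "ts m < r" using h by simp
    show ?thesis
    proof (intro exI[of _ "min (r - ts m) (ts (Suc m) - r)"] conjI allI impI)
      show "0 < min (r - ts m) (ts (Suc m) - r)" using lt h by simp
      fix r' assume "\<bar>r' - r\<bar> < min (r - ts m) (ts (Suc m) - r)"
      then have "r' \<in> {ts m..<ts (Suc m)}" by (auto simp: abs_less_iff)
      then show "\<sigma> r' = \<sigma> r" using cm[of r' m] cm[of r m] h by simp
    qed
  qed
qed

lemma dwell_interval:
  assumes t: "t \<ge> 0" and r: "r \<ge> t + tauD"
  shows "\<exists>s1. t \<le> s1 \<and> s1 \<le> r \<and> (\<forall>r'\<in>{s1..<s1+tauD}. \<sigma> r' = \<sigma> r)"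
proof -
  have r0: "r \<ge> 0" using t r tauD by simp
  from between_instants[OF r0] consider "r < ts 0" | m where "ts m \<le> r" "r < ts (Suc m)" by blast
  then show ?thesis
  proof cases
    case 1
    show ?thesis
      by (intro exI[of _ t]) (use 1 t r tauD in \<open>auto intro!: trans[OF c0 c0[symmetric]]\<close>)
  next
    case 2
    then have h: "ts m \<le> r" "r < ts (Suc m)" .
    show ?thesis
    proof (cases "ts m \<ge> t")
      case True
      show ?thesis
        by (intro exI[of _ "ts m"]) (use 2 True tsgap[of m] in \<open>auto intro!: trans[OF cm cm[symmetric]]\<close>)
    next
      case False
      show ?thesis
      proof (intro exI[of _ t] conjI ballI)
        show "t \<le> t" "t \<le> r" using r tauD by auto
        fix r' assume "r' \<in> {t..<t + tauD}"
        then have "r' \<in> {ts m..<ts (Suc m)}" using h False r by auto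
        then show "\<sigma> r' = \<sigma> r" using cm[of r' m] cm[of r m] h by simp
      qed
    qed
  qed
qed

end

lemma dwell_time_signal_dwell: assumes "dwell_time_signal \<sigma> tauD" shows "\<exists>ts. dwell \<sigma> tauD ts"
  using assms unfolding dwell_time_signal_def dwell_def by blast


lemma trancl_exit:
  assumes "(p, q) \<in> E\<^sup>+" "p \<in> X" "q \<notin> X"
  shows "\<exists>p' q'. (p', q') \<in> E \<and> p' \<in> X \<and> q' \<notin> X"
  using assms
proof (induction rule: trancl_induct)
  case (base y) then show ?case by blast
next
  case (step y z) then show ?case by (cases "y \<in> X") blast+
qed

text \<open>Uniform joint L-connectivity with period \<open>T\<close> and a dwell time \<open>tauD\<close> yield the spreading
  condition with intervals of length \<open>tauD\<close> and windows of length \<open>T + 2 tauD\<close>: the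
  joint graph over \<open>[t + tauD, t + tauD + T)\<close> has an arc from the leaders or \<open>G\<close> to the
  outside of \<open>G\<close>, and the dwell time keeps it active on a whole interval.\<close>
lemma spreading_from_UJLC:
  fixes \<sigma> :: "real \<Rightarrow> ('n, 'k) digraph"
  assumes dw: "dwell \<sigma> tauD ts" and T: "T > 0"
    and conn: "\<forall>t\<ge>0. L_connected (joint_graph \<sigma> t (t + T))" and t0: "t0 \<ge> 0"
  shows "spreading \<sigma> tauD (T + 2 * tauD) t0"
  unfolding spreading_def
proof (intro allI impI)
  fix t :: real and G :: "'n set" assume t: "t0 \<le> t" and G: "G \<noteq> UNIV"
  interpret dwell \<sigma> tauD ts by (rule dw)
  obtain i0 where i0: "i0 \<notin> G" using G by blast
  define E where "E = joint_graph \<sigma> (t + tauD) (t + tauD + T)"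
  have "t + tauD \<ge> 0" using t t0 tauD by simp
  then have "L_connected E" unfolding E_def using conn by blast
  then obtain j where "(Inr j, Inl i0) \<in> E\<^sup>+" unfolding L_connected_def by blast
  moreover define X :: "('n + 'k) set" where "X = range Inr \<union> Inl ` G"
  ultimately obtain p q where pq: "(p, q) \<in> E" "p \<in> X" "q \<notin> X"
  proof -
    have "Inr j \<in> X" "Inl i0 \<notin> X" using i0 unfolding X_def by auto
    then show ?thesis using trancl_exit[of "Inr j" "Inl i0" E X] \<open>(Inr j, Inl i0) \<in> E\<^sup>+\<close> that by blast
  qed
  obtain i where qi: "q = Inl i" "i \<notin> G" using pq(3) unfolding X_def by (cases q) auto
  obtain r where r: "r \<in> {t + tauD..<t + tauD + T}" "(p, q) \<in> \<sigma> r"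
    using pq(1) unfolding E_def joint_graph_def by blast
  obtain s1 where s1: "t \<le> s1" "s1 \<le> r" "\<forall>r'\<in>{s1..<s1+tauD}. \<sigma> r' = \<sigma> r"
    using dwell_interval[of t r] t t0 r(1) by auto
  have act: "(p, Inl i) \<in> \<sigma> r'" if "r' \<in> {s1<..<s1+tauD}" for r'
    using s1(3) that r(2) qi by auto
  have "fed_during \<sigma> G i s1 tauD"
    using pq(2) act unfolding X_def fed_during_def by blast
  moreover have "s1 + tauD \<le> t + (T + 2 * tauD)" using s1 r by auto
  ultimately show "\<exists>i. i \<notin> G \<and> (\<exists>s. t \<le> s \<and> s + tauD \<le> t + (T + 2 * tauD) \<and> fed_during \<sigma> G i s tauD)"
    using qi(2) s1(1) by blast
qed

section \<open>Distance to the convex hull of the leaders\<close>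

lemma hull_closed_ne:
  fixes y :: "real^'d^'k::finite"
  shows "closed (convex hull (range (\<lambda>j. y $ j)))" "convex hull (range (\<lambda>j. y $ j)) \<noteq> {}"
    "convex (convex hull (range (\<lambda>j. y $ j)))"
proof -
  have "compact (convex hull (range (\<lambda>j. y $ j)))"
    by (intro compact_convex_hull finite_imp_compact) simp
  then show "closed (convex hull (range (\<lambda>j. y $ j)))" by (rule compact_imp_closed)
  show "convex hull (range (\<lambda>j. y $ j)) \<noteq> {}" by simp
  show "convex (convex hull (range (\<lambda>j. y $ j)))" by simp
qed

lemma hull_inner_le:
  fixes y :: "real^'d^'k::finite"
  assumes "p \<in> convex hull (range (\<lambda>j. y $ j))"
  shows "inner e p \<le> (MAX j. inner e (y $ j))"
proof -
  have "convex hull (range (\<lambda>j. y $ j)) \<subseteq> {q. inner e q \<le> (MAX j. inner e (y $ j))}"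
    by (intro hull_minimal) (auto simp: convex_halfspace_le)
  then show ?thesis using assms by auto
qed

text \<open>The distance to the hull is characterised through support functions: for every unit
  vector \<open>e\<close> the support gap \<open>e \<bullet> v - max\<^sub>j e \<bullet> y\<^sub>j\<close> is a lower bound, and some unit
  vector (the normalised direction to the nearest point) attains the distance.\<close>
lemma support_gap_le_infdist:
  fixes y :: "real^'d^'k::finite"
  assumes e: "norm e = 1"
  shows "inner e v - (MAX j. inner e (y $ j)) \<le> infdist v (convex hull (range (\<lambda>j. y $ j)))"
proof -
  note H = hull_closed_ne[of y]
  obtain p where p: "p \<in> convex hull (range (\<lambda>j. y $ j))" "infdist v (convex hull (range (\<lambda>j. y $ j))) = dist v p"
    using infdist_attains_inf[OF H(1) H(2)] by blast
  have "inner e v - (MAX j. inner e (y $ j)) \<le> inner e v - inner e p"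
    using hull_inner_le[OF p(1), of e] by linarith
  also have "\<dots> = inner e (v - p)" by (simp add: inner_diff_right)
  also have "\<dots> \<le> norm e * norm (v - p)" by (rule norm_cauchy_schwarz)
  also have "\<dots> = dist v p" using e by (simp add: dist_norm)
  finally show ?thesis using p(2) by simp
qed

lemma infdist_le_support_gap:
  fixes y :: "real^'d^'k::finite" and v :: "real^'d"
  shows "\<exists>e. norm e = 1 \<and> infdist v (convex hull (range (\<lambda>j. y $ j))) \<le> max 0 (inner e v - (MAX j. inner e (y $ j)))"
proof -
  note H = hull_closed_ne[of y]
  let ?K = "convex hull (range (\<lambda>j. y $ j))"
  obtain p where p: "p \<in> ?K" "infdist v ?K = dist v p"
    using infdist_attains_inf[OF H(1) H(2)] by blast
  show ?thesis
  proof (cases "v = p")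
    case True
    obtain i :: 'd where True by simp
    show ?thesis using p True by (intro exI[of _ "axis i 1"]) (auto simp: norm_axis_1)
  next
    case False
    define d where "d = dist v p"
    have d: "d > 0" using False unfolding d_def by simp
    define e where "e = (1 / d) *\<^sub>R (v - p)"
    have ne: "norm e = 1" unfolding e_def d_def using d[unfolded d_def] by (simp add: dist_norm)
    have close: "\<forall>z\<in>?K. dist v p \<le> dist v z" using p infdist_le by metis
    have "inner e (y $ j) \<le> inner e p" for j
    proof -
      have "inner (v - p) (y $ j - p) \<le> 0"
        by (rule any_closest_point_dot[OF H(3) H(1) p(1) _ close]) (simp add: hull_inc)
      then have "inner e (y $ j - p) \<le> 0" unfolding e_def using d by (simp add: divide_nonpos_pos)
      then show ?thesis by (simp add: inner_diff_right)
    qed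
    then have mx: "(MAX j. inner e (y $ j)) \<le> inner e p" by simp
    have "inner e v - inner e p = d"
    proof -
      have "inner e v - inner e p = inner e (v - p)" by (simp add: inner_diff_right)
      also have "\<dots> = (1 / d) * (norm (v - p))\<^sup>2" unfolding e_def by (simp add: power2_norm_eq_inner)
      also have "\<dots> = d" unfolding d_def using d[unfolded d_def] by (simp add: dist_norm power2_eq_square)
      finally show ?thesis .
    qed
    then have "infdist v ?K \<le> inner e v - (MAX j. inner e (y $ j))" using mx p(2) unfolding d_def by linarith
    then show ?thesis using ne by (intro exI[of _ e]) auto
  qed
qed

lemma hull_dist_ge:
  fixes x :: "real^'d^'n::finite" and y :: "real^'d^'k::finite"
  shows "infdist (x $ i) (convex hull (range (\<lambda>j. y $ j))) \<le> hull_dist x y"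
  unfolding hull_dist_def by (rule Max_ge) auto

lemma hull_dist_nonneg:
  fixes x :: "real^'d^'n::finite" and y :: "real^'d^'k::finite"
  shows "0 \<le> hull_dist x y"
  using order_trans[OF infdist_nonneg hull_dist_ge] .

lemma hull_dist_le_support_bound:
  fixes v :: "real^'d^'n::finite" and yy :: "real^'d^'k::finite"
  assumes B: "0 \<le> B" and H: "\<And>e i. norm e = 1 \<Longrightarrow> inner e (v $ i) - (MAX j. inner e (yy $ j)) \<le> B"
  shows "hull_dist v yy \<le> B"
  unfolding hull_dist_def
proof (rule Max.boundedI)
  show "finite (range (\<lambda>i. infdist (v $ i) (convex hull range (($) yy))))" by simp
  show "range (\<lambda>i. infdist (v $ i) (convex hull range (($) yy))) \<noteq> {}" by simp
  fix a assume "a \<in> range (\<lambda>i. infdist (v $ i) (convex hull range (($) yy)))"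
  then obtain i where a: "a = infdist (v $ i) (convex hull range (($) yy))" by blast
  obtain e where e: "norm e = 1" "a \<le> max 0 (inner e (v $ i) - (MAX j. inner e (yy $ j)))"
    using infdist_le_support_gap[where y=yy and v="v $ i"] a by auto
  then show "a \<le> B" using H[OF e(1), of i] B by linarith
qed


section \<open>Solutions of system (5)\<close>

lemma integral_form_continuous:
  fixes f g :: "real \<Rightarrow> 'a::banach"
  assumes int: "\<And>t. t \<ge> 0 \<Longrightarrow> (g has_integral (f t - f 0)) {0..t}"
  shows "continuous_on {0..T} f"
proof (cases "T \<ge> 0")
  case True
  have "continuous_on {0..T} (\<lambda>s. f 0 + integral {0..s} g)"
    using indefinite_integral_continuous_1[OF has_integral_integrable[OF int[OF True]]]
    by (intro continuous_intros)
  moreover have "f 0 + integral {0..s} g = f s" if "s \<in> {0..T}" for s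
    using integral_unique[OF int, of s] that by simp
  ultimately show ?thesis by (rule continuous_on_eq)
qed simp

lemma integral_form_increment:
  fixes f g :: "real \<Rightarrow> 'a::banach"
  assumes int: "\<And>t. t \<ge> 0 \<Longrightarrow> (g has_integral (f t - f 0)) {0..t}" and cs: "0 \<le> c" "c \<le> s"
  shows "f s - f c = integral {c..s} g"
proof -
  have "integral {0..c} g + integral {c..s} g = integral {0..s} g"
    using cs by (intro Henstock_Kurzweil_Integration.integral_combine has_integral_integrable[OF int]) auto
  then show ?thesis using integral_unique[OF int, of s] integral_unique[OF int, of c] cs
    by (simp add: algebra_simps)
qed

definition rhs_for ::
  "('n::finite, 'k::finite) digraph
   \<Rightarrow> ('n \<Rightarrow> 'n \<Rightarrow> real^'d^'n \<Rightarrow> real^'d^'k \<Rightarrow> real \<Rightarrow> real)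
   \<Rightarrow> ('n \<Rightarrow> 'k \<Rightarrow> real^'d^'n \<Rightarrow> real^'d^'k \<Rightarrow> real \<Rightarrow> real)
   \<Rightarrow> ('n \<Rightarrow> real \<Rightarrow> real^'d) \<Rightarrow> 'n \<Rightarrow> real^'d^'n \<Rightarrow> real^'d^'k \<Rightarrow> real \<Rightarrow> real^'d" where
  "rhs_for E a b w i x y t =
     (\<Sum>j \<in> {j. (Inl j, Inl i) \<in> E}. a i j x y t *\<^sub>R (x $ j - x $ i))
   + (\<Sum>j \<in> {j. (Inr j, Inl i) \<in> E}. b i j x y t *\<^sub>R (y $ j - x $ i))
   + w i t"

lemma follower_rhs_for: "follower_rhs \<sigma> a b w i x y t = rhs_for (\<sigma> t) a b w i x y t"
  unfolding follower_rhs_def rhs_for_def by simp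

locale solution5 = dwell \<sigma> tauD ts for \<sigma> :: "real \<Rightarrow> ('n::finite, 'k::finite) digraph" and tauD ts +
  fixes a :: "'n \<Rightarrow> 'n \<Rightarrow> real^'d^'n \<Rightarrow> real^'d^'k \<Rightarrow> real \<Rightarrow> real"
    and b :: "'n \<Rightarrow> 'k \<Rightarrow> real^'d^'n \<Rightarrow> real^'d^'k \<Rightarrow> real \<Rightarrow> real"
    and u :: "'k \<Rightarrow> real^'d^'k \<Rightarrow> real \<Rightarrow> real^'d" and w :: "'n \<Rightarrow> real \<Rightarrow> real^'d"
    and x :: "real \<Rightarrow> real^'d^'n" and y :: "real \<Rightarrow> real^'d^'k"
  assumes a_cont: "\<And>i j. continuous_on UNIV (\<lambda>(x, y, t). a i j x y t)"
    and b_cont: "\<And>i j. continuous_on UNIV (\<lambda>(x, y, t). b i j x y t)"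
    and w_cont: "\<And>i. continuous_on UNIV (w i)"
    and sol: "is_solution5 \<sigma> a b u w x y"
begin

abbreviation "rhs i s \<equiv> follower_rhs \<sigma> a b w i (x s) (y s) s"
abbreviation "ul j s \<equiv> u j (y s) s"

lemma x_int: "t \<ge> 0 \<Longrightarrow> ((\<lambda>s. rhs i s) has_integral (x t $ i - x 0 $ i)) {0..t}"
  using sol unfolding is_solution5_def by blast

lemma y_int: "t \<ge> 0 \<Longrightarrow> ((\<lambda>s. ul j s) has_integral (y t $ j - y 0 $ j)) {0..t}"
  using sol unfolding is_solution5_def by blast

lemma x_comp_cont: "continuous_on {0..T} (\<lambda>s. x s $ i)"
  by (rule integral_form_continuous[OF x_int])

lemma x_incr: "0 \<le> c \<Longrightarrow> c \<le> s \<Longrightarrow> x s $ i - x c $ i = integral {c..s} (\<lambda>s. rhs i s)"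
  by (rule integral_form_increment[OF x_int])

lemma y_incr: "0 \<le> c \<Longrightarrow> c \<le> s \<Longrightarrow> y s $ j - y c $ j = integral {c..s} (\<lambda>s. ul j s)"
  by (rule integral_form_increment[OF y_int])

lemma trajectory_cont: "continuous_on {0..T} x" "continuous_on {0..T} y"
proof -
  have "continuous_on {0..T} (\<lambda>s. \<chi> i. x s $ i)"
    by (intro continuous_on_vec_lambda integral_form_continuous[OF x_int])
  then show "continuous_on {0..T} x" by simp
  have "continuous_on {0..T} (\<lambda>s. \<chi> j. y s $ j)"
    by (intro continuous_on_vec_lambda integral_form_continuous[OF y_int])
  then show "continuous_on {0..T} y" by simp
qed

lemma rhs_for_cont:
  assumes "S \<subseteq> {0..T}"
  shows "continuous_on S (\<lambda>s. rhs_for E a b w i (x s) (y s) s)"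
proof -
  have xc: "continuous_on S x" and yc: "continuous_on S y"
    using trajectory_cont continuous_on_subset assms by blast+
  have tr: "continuous_on S (\<lambda>s. (x s, y s, s))" using xc yc by (intro continuous_intros)
  have "continuous_on S (\<lambda>s. a i j (x s) (y s) s)" "continuous_on S (\<lambda>s. b i l (x s) (y s) s)" for j l
    using continuous_on_compose2[OF a_cont[of i j] tr] continuous_on_compose2[OF b_cont[of i l] tr]
    by simp_all
  then show ?thesis
    unfolding rhs_for_def using xc yc continuous_on_subset[OF w_cont[of i], of S]
    by (intro continuous_intros) auto
qed
text \<open>Away from the switching instants the signal is locally constant, so the follower
  equations hold classically there.\<close>
lemma x_deriv:
  assumes r: "r > 0" "r \<notin> range ts"
  shows "((\<lambda>s. x s $ i) has_vector_derivative rhs i r) (at r)"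
proof -
  obtain \<delta> where \<delta>: "\<delta> > 0" "\<forall>r'. \<bar>r' - r\<bar> < \<delta> \<longrightarrow> \<sigma> r' = \<sigma> r" using locally_constant[OF r] by blast
  define c where "c = r - min \<delta> r / 2"
  define d where "d = r + \<delta> / 2"
  have cd: "0 < c" "c < r" "r < d" unfolding c_def d_def using \<delta> r by auto
  have sig: "\<sigma> s = \<sigma> r" if "s \<in> {c..d}" for s
  proof -
    have "\<bar>s - r\<bar> < \<delta>" using that \<delta>(1) r unfolding c_def d_def by (auto simp: abs_less_iff)
    then show ?thesis using \<delta>(2) by blast
  qed
  define F where "F s = rhs_for (\<sigma> r) a b w i (x s) (y s) s" for s
  have Fc: "continuous_on {c..d} F" unfolding F_def by (rule rhs_for_cont[of _ d]) (use cd in auto)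
  have eqF: "rhs i s = F s" if "s \<in> {c..d}" for s unfolding F_def follower_rhs_for sig[OF that] ..
  have I: "((\<lambda>u. integral {c..u} F) has_vector_derivative F r) (at r within {c..d})"
    using integral_has_vector_derivative[OF Fc, of r] cd by auto
  have "((\<lambda>s. x c $ i + integral {c..s} F) has_vector_derivative (0 + F r)) (at r within {c..d})"
    by (rule has_vector_derivative_add[OF has_vector_derivative_const I])
  then have "((\<lambda>s. x c $ i + integral {c..s} F) has_vector_derivative F r) (at r within {c..d})" by simp
  moreover have "at r within {c..d} = at r" by (rule at_within_interior) (use cd in simp)
  ultimately have D: "((\<lambda>s. x c $ i + integral {c..s} F) has_vector_derivative F r) (at r)"
    by metis
  have xe: "x s $ i = x c $ i + integral {c..s} F" if "s \<in> {c<..<d}" for s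
  proof -
    have "x s $ i - x c $ i = integral {c..s} (\<lambda>s. rhs i s)" using x_incr[of c s i] cd that by auto
    also have "\<dots> = integral {c..s} F" using that by (intro integral_cong eqF) auto
    finally show ?thesis by (simp add: algebra_simps)
  qed
  have "((\<lambda>s. x s $ i) has_vector_derivative F r) (at r)"
    by (rule has_vector_derivative_transform_within_open[OF D, of "{c<..<d}"]) (use cd xe in auto)
  then show ?thesis using eqF[of r] cd by simp
qed

end


section \<open>Projected dynamics of a solution\<close>

definition w_mass :: "('n::finite \<Rightarrow> real \<Rightarrow> real^'d) \<Rightarrow> real \<Rightarrow> real \<Rightarrow> real" where
  "w_mass w t0 s = integral {t0..s} (\<lambda>r. \<Sum>l\<in>UNIV. norm (w l r))"

locale bounded_solution5 = solution5 \<sigma> tauD ts a b u w x y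
  for \<sigma> :: "real \<Rightarrow> ('n::finite, 'k::finite) digraph" and tauD ts a b u w
    and x :: "real \<Rightarrow> real^'d^'n" and y +
  fixes alo ahi blo :: real
  assumes alo: "0 < alo" and alo_ahi: "alo \<le> ahi" and blo: "0 < blo"
    and a_bounds: "\<And>i j x y t. alo \<le> a i j x y t \<and> a i j x y t \<le> ahi"
    and b_bound: "\<And>i j x y t. blo \<le> b i j x y t"
begin

sublocale W: weighted_drift alo ahi blo "\<lambda>i j r. a i j (x r) (y r) r" "\<lambda>i l r. b i l (x r) (y r) r"
  by unfold_locales (use alo alo_ahi blo a_bounds b_bound in auto)

lemma w_sum_cont: "continuous_on S (\<lambda>r. \<Sum>l\<in>UNIV. norm (w l r))"
  using w_cont by (intro continuous_intros) (auto intro: continuous_on_subset)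

lemma w_mass_nonneg: "t0 \<le> s \<Longrightarrow> 0 \<le> w_mass w t0 s"
  unfolding w_mass_def by (intro integral_nonneg integrable_continuous_real w_sum_cont) (auto intro: sum_nonneg)

lemma w_mass_deriv:
  assumes "t0 < r" "r < t1"
  shows "((\<lambda>s. w_mass w t0 s) has_real_derivative (\<Sum>l\<in>UNIV. norm (w l r))) (at r)"
proof -
  have "((\<lambda>s. w_mass w t0 s) has_vector_derivative (\<Sum>l\<in>UNIV. norm (w l r))) (at r within {t0..t1})"
    unfolding w_mass_def using assms by (intro integral_has_vector_derivative w_sum_cont) auto
  moreover have "at r within {t0..t1} = at r" by (rule at_within_interior) (use assms in simp)
  ultimately show ?thesis by (metis has_real_derivative_iff_has_vector_derivative)
qed

lemma w_mass_cont: "continuous_on {t0..t1} (\<lambda>s. w_mass w t0 s)"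
  unfolding w_mass_def by (intro indefinite_integral_continuous_1 integrable_continuous_real w_sum_cont)

definition "shifted_proj e Zu t0 i s =
  inner e (x s $ i) - (MAX j. inner e (y t0 $ j)) - Zu - w_mass w t0 s"

lemma shifted_proj_cont:
  assumes "0 \<le> t0"
  shows "continuous_on {t0..t1} (shifted_proj e Zu t0 i)"
proof -
  have "continuous_on {t0..t1} (\<lambda>s. x s $ i)"
    using x_comp_cont[of t1 i] assms by (auto elim: continuous_on_subset)
  then show ?thesis unfolding shifted_proj_def using w_mass_cont[of t0 t1]
    by (intro continuous_on_diff continuous_on_inner continuous_on_const) auto
qed

text \<open>Key estimate: while the leaders stay within \<open>Zu\<close> of their position at \<open>t0\<close>, the projected
  right-hand side minus the disturbance size is bounded by the drift of the shifted projections
  (leaders lie below the shifted support value, disturbances are absorbed by \<open>w_mass\<close>).\<close>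
lemma projected_rhs_le_drift:
  fixes e :: "real^'d"
  assumes e: "norm e = 1" and tr: "t0 \<le> r" and Hy: "\<And>j. norm (y r $ j - y t0 $ j) \<le> Zu"
  shows "inner e (rhs i r) - (\<Sum>l\<in>UNIV. norm (w l r))
    \<le> drift \<sigma> (\<lambda>i j r. a i j (x r) (y r) r) (\<lambda>i l r. b i l (x r) (y r) r) (shifted_proj e Zu t0) i r"
proof -
  let ?z = "shifted_proj e Zu t0"
  let ?A = "{j. (Inl j, Inl i) \<in> \<sigma> r}" and ?B = "{j. (Inr j, Inl i) \<in> \<sigma> r}"
  have expand: "inner e (rhs i r) = (\<Sum>j\<in>?A. a i j (x r) (y r) r * (?z j r - ?z i r))
      + (\<Sum>j\<in>?B. b i j (x r) (y r) r * (inner e (y r $ j) - inner e (x r $ i))) + inner e (w i r)"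
    unfolding follower_rhs_def shifted_proj_def
    by (simp add: inner_sum_right inner_add_right inner_diff_right)
  have leader_below: "inner e (y r $ j) - inner e (x r $ i) \<le> - ?z i r" for j
  proof -
    have "inner e (y r $ j) - inner e (y t0 $ j) \<le> norm e * norm (y r $ j - y t0 $ j)"
      using norm_cauchy_schwarz[of e "y r $ j - y t0 $ j"] by (simp add: inner_diff_right)
    also have "\<dots> \<le> Zu" using Hy[of j] e by simp
    finally have "inner e (y r $ j) \<le> inner e (y t0 $ j) + Zu" by simp
    moreover have "inner e (y t0 $ j) \<le> (MAX j. inner e (y t0 $ j))" by simp
    moreover have "0 \<le> w_mass w t0 r" using w_mass_nonneg tr by auto
    ultimately show ?thesis unfolding shifted_proj_def by linarith
  qed
  have "(\<Sum>j\<in>?B. b i j (x r) (y r) r * (inner e (y r $ j) - inner e (x r $ i)))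
      \<le> (\<Sum>j\<in>?B. b i j (x r) (y r) r * (- ?z i r))"
    using leader_below b_bound blo by (intro sum_mono mult_left_mono) (auto intro: order.trans[OF less_imp_le])
  also have "\<dots> = - (\<Sum>j\<in>?B. b i j (x r) (y r) r) * ?z i r"
    by (simp add: sum_distrib_right sum_negf)
  finally have leaders: "(\<Sum>j\<in>?B. b i j (x r) (y r) r * (inner e (y r $ j) - inner e (x r $ i)))
      \<le> - (\<Sum>j\<in>?B. b i j (x r) (y r) r) * ?z i r" .
  have "inner e (w i r) \<le> norm (w i r)" using norm_cauchy_schwarz[of e "w i r"] e by simp
  also have "\<dots> \<le> (\<Sum>l\<in>UNIV. norm (w l r))" by (rule member_le_sum) auto
  finally show ?thesis unfolding drift_def using expand leaders by linarith
qed

lemma shifted_proj_sub_drift: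
  fixes e :: "real^'d"
  assumes t0: "0 \<le> t0" and e: "norm e = 1"
    and Hy: "\<And>j s. s \<in> {t0..t1} \<Longrightarrow> norm (y s $ j - y t0 $ j) \<le> Zu"
  shows "W.sub_drift \<sigma> (shifted_proj e Zu t0) (ts ` {m. ts m \<le> t1}) t0 t1"
  unfolding W.sub_drift_def
proof (intro conjI allI ballI)
  show "continuous_on {t0..t1} (shifted_proj e Zu t0 i)" for i by (rule shifted_proj_cont[OF t0])
  fix i r assume r: "r \<in> {t0<..<t1} - ts ` {m. ts m \<le> t1}"
  have r0: "r > 0" "r \<notin> range ts" using r t0 by auto
  have dx: "((\<lambda>s. inner e (x s $ i)) has_real_derivative inner e (rhs i r)) (at r)"
    using bounded_linear.has_vector_derivative[OF bounded_linear_inner_right x_deriv[OF r0]]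
    by (simp add: has_real_derivative_iff_has_vector_derivative)
  have "(shifted_proj e Zu t0 i has_real_derivative
      (inner e (rhs i r) - (\<Sum>l\<in>UNIV. norm (w l r)))) (at r)"
    unfolding shifted_proj_def[abs_def] using w_mass_deriv[of t0 r t1] r
    by (auto intro!: derivative_eq_intros dx)
  moreover have "inner e (rhs i r) - (\<Sum>l\<in>UNIV. norm (w l r))
      \<le> drift \<sigma> (\<lambda>i j r. a i j (x r) (y r) r) (\<lambda>i l r. b i l (x r) (y r) r) (shifted_proj e Zu t0) i r"
    using projected_rhs_le_drift[OF e, of t0 r] Hy r by auto
  ultimately show "\<exists>d. (shifted_proj e Zu t0 i has_real_derivative d) (at r) \<and>
      d \<le> drift \<sigma> (\<lambda>i j r. a i j (x r) (y r) r) (\<lambda>i l r. b i l (x r) (y r) r) (shifted_proj e Zu t0) i r"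
    by blast
qed

end

section \<open>Decay of the hull distance\<close>

lemma geometric_le_exp:
  fixes \<rho> P t :: real
  assumes \<rho>: "0 < \<rho>" "\<rho> < 1" and P: "P > 0" and t: "t < real m * P + P"
  shows "\<rho> ^ m \<le> exp (ln \<rho> / P * t) / \<rho>"
proof -
  have "\<rho> ^ m = exp (real m * ln \<rho>)" using \<rho> by (simp add: exp_of_nat_mult)
  also have "\<dots> \<le> exp ((t / P - 1) * ln \<rho>)"
  proof -
    have "t / P - 1 \<le> real m" using t P by (simp add: field_simps)
    moreover have "ln \<rho> < 0" using \<rho> by simp
    ultimately show ?thesis by (simp add: mult_right_mono_neg)
  qed
  also have "\<dots> = exp (ln \<rho> / P * t) / \<rho>"
  proof -
    have "(t / P - 1) * ln \<rho> = ln \<rho> / P * t - ln \<rho>" by (simp add: algebra_simps)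
    then show ?thesis using \<rho> by (simp add: exp_diff)
  qed
  finally show ?thesis .
qed

lemma z_norm_ge_u: "norm (u j (y s) s) \<le> z_norm u w y s"
proof -
  have "(norm (u j (y s) s))\<^sup>2 \<le> (\<Sum>j\<in>UNIV. (norm (u j (y s) s))\<^sup>2)" by (rule member_le_sum) auto
  also have "\<dots> \<le> (\<Sum>j\<in>UNIV. (norm (u j (y s) s))\<^sup>2) + (\<Sum>i\<in>UNIV. (norm (w i s))\<^sup>2)"
    by (simp add: sum_nonneg)
  finally show ?thesis unfolding z_norm_def by (simp add: real_le_rsqrt)
qed

lemma z_norm_ge_w: "norm (w i s) \<le> z_norm u w y s"
proof -
  have "(norm (w i s))\<^sup>2 \<le> (\<Sum>i\<in>UNIV. (norm (w i s))\<^sup>2)" by (rule member_le_sum) auto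
  also have "\<dots> \<le> (\<Sum>j\<in>UNIV. (norm (u j (y s) s))\<^sup>2) + (\<Sum>i\<in>UNIV. (norm (w i s))\<^sup>2)"
    by (simp add: sum_nonneg)
  finally show ?thesis unfolding z_norm_def by (simp add: real_le_rsqrt)
qed

lemma z_norm_nonneg: "0 \<le> z_norm u w y s"
  unfolding z_norm_def by (simp add: sum_nonneg)

text \<open>Weight of the input integral in the final estimate: the leaders' displacement enters
  twice and each of the \<open>CARD('n)\<close> disturbances once.\<close>
definition input_weight :: "'n::finite itself \<Rightarrow> real" where
  "input_weight _ = real CARD('n) + 2"

context bounded_solution5
begin

abbreviation "zn s \<equiv> z_norm u w y s"

definition "input_integral s = integral {0..s} (\<lambda>r. input_weight TYPE('n) * zn r)"

lemma support_gap_from_shifted: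
  fixes e :: "real^'d"
  assumes e: "norm e = 1" and Hy: "\<And>j. norm (y s $ j - y t0 $ j) \<le> Zu"
    and bound: "shifted_proj e Zu t0 i s \<le> Bd"
  shows "inner e (x s $ i) - (MAX j. inner e (y s $ j)) \<le> Bd + 2 * Zu + w_mass w t0 s"
proof -
  let ?cm = "MAX j. inner e (y t0 $ j)"
  have "?cm \<in> range (\<lambda>j. inner e (y t0 $ j))" by (rule Max_in) auto
  then obtain j0 where j0: "?cm = inner e (y t0 $ j0)" by blast
  have "inner e (y t0 $ j0) - inner e (y s $ j0) \<le> norm e * norm (y t0 $ j0 - y s $ j0)"
    using norm_cauchy_schwarz[of e "y t0 $ j0 - y s $ j0"] by (simp add: inner_diff_right)
  also have "\<dots> \<le> Zu" using Hy[of j0] e by (simp add: norm_minus_commute)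
  finally have "?cm - Zu \<le> inner e (y s $ j0)" using j0 by simp
  also have "\<dots> \<le> (MAX j. inner e (y s $ j))" by simp
  finally show ?thesis using bound unfolding shifted_proj_def by linarith
qed

lemma shifted_proj_start:
  fixes e :: "real^'d"
  assumes e: "norm e = 1" and Zu: "0 \<le> Zu"
  shows "shifted_proj e Zu t0 i t0 \<le> hull_dist (x t0) (y t0)"
proof -
  have "inner e (x t0 $ i) - (MAX j. inner e (y t0 $ j)) \<le> hull_dist (x t0) (y t0)"
    using support_gap_le_infdist[OF e] hull_dist_ge order_trans by blast
  then show ?thesis unfolding shifted_proj_def w_mass_def using Zu by simp
qed

lemma support_gap_invariant:
  fixes e :: "real^'d"
  assumes t0: "0 \<le> t0" "t0 \<le> s" and e: "norm e = 1" and Zu: "0 \<le> Zu"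
    and Hy: "\<And>j r. r \<in> {t0..s} \<Longrightarrow> norm (y r $ j - y t0 $ j) \<le> Zu"
  shows "inner e (x s $ i) - (MAX j. inner e (y s $ j)) \<le> hull_dist (x t0) (y t0) + 2 * Zu + w_mass w t0 s"
proof -
  have "\<forall>i. \<forall>r\<in>{t0..s}. shifted_proj e Zu t0 i r \<le> hull_dist (x t0) (y t0)"
    by (rule W.upper_bound_persists[OF finite_instants t0(2) hull_dist_nonneg
          shifted_proj_sub_drift[OF t0(1) e Hy] shifted_proj_start[OF e Zu]])
  then show ?thesis using support_gap_from_shifted[OF e, of s t0 Zu i] Hy t0 by auto
qed

lemma support_gap_contracts:
  fixes e :: "real^'d"
  assumes t0: "0 \<le> t0" and e: "norm e = 1" and Zu: "0 \<le> Zu"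
    and t1: "t1 = t0 + real CARD('n) * W" and W: "tauD \<le> W" and spread: "spreading \<sigma> tauD W t0"
    and Hy: "\<And>j r. r \<in> {t0..t1} \<Longrightarrow> norm (y r $ j - y t0 $ j) \<le> Zu"
  shows "inner e (x t1 $ i) - (MAX j. inner e (y t1 $ j))
     \<le> W.contraction_rate tauD W * hull_dist (x t0) (y t0) + 2 * Zu + w_mass w t0 t1"
proof -
  have t01: "t0 \<le> t1" using t1 W tauD by simp
  have "\<forall>i. shifted_proj e Zu t0 i t1
      \<le> hull_dist (x t0) (y t0) - W.window_gain tauD W ^ CARD('n) * hull_dist (x t0) (y t0)"
    unfolding t1
    by (rule W.gap_after_windows[OF finite_instants tauD W spread hull_dist_nonneg
          shifted_proj_sub_drift[OF t0 e] shifted_proj_start[OF e Zu]]) (use Hy t1 in auto)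
  then have "shifted_proj e Zu t0 i t1 \<le> W.contraction_rate tauD W * hull_dist (x t0) (y t0)"
    unfolding W.contraction_rate_def by (simp add: algebra_simps)
  then show ?thesis using support_gap_from_shifted[OF e] Hy t01 by auto
qed

context
  fixes tend :: real
  assumes zint: "(\<lambda>s. zn s) integrable_on {0..tend}"
begin

lemma zint_sub: "0 \<le> p \<Longrightarrow> q \<le> tend \<Longrightarrow> (\<lambda>s. zn s) integrable_on {p..q}"
  by (rule integrable_on_subinterval[OF zint]) auto

lemma leader_displacement:
  assumes "0 \<le> t0" "t0 \<le> s" "s \<le> t1" "t1 \<le> tend"
  shows "norm (y s $ j - y t0 $ j) \<le> integral {t0..t1} (\<lambda>s. zn s)"
proof -
  have "(\<lambda>s. ul j s) integrable_on {t0..s}"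
    using has_integral_integrable[OF y_int[of s j]] assms by (intro integrable_on_subinterval) auto
  then have "norm (y s $ j - y t0 $ j) \<le> integral {t0..s} (\<lambda>s. zn s)"
    using y_incr[of t0 s j] assms zint_sub[of t0 s] z_norm_ge_u
    by (auto intro!: integral_norm_bound_integral)
  also have "\<dots> \<le> integral {t0..t1} (\<lambda>s. zn s)"
    using assms by (intro integral_subset_le zint_sub) (auto simp: z_norm_nonneg)
  finally show ?thesis .
qed

lemma w_mass_le:
  assumes "0 \<le> t0" "t0 \<le> s" "s \<le> tend"
  shows "w_mass w t0 s \<le> real CARD('n) * integral {t0..s} (\<lambda>s. zn s)"
proof -
  have "w_mass w t0 s \<le> integral {t0..s} (\<lambda>r. real CARD('n) * zn r)"
    unfolding w_mass_def
  proof (rule integral_le)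
    show "(\<lambda>r. \<Sum>l\<in>UNIV. norm (w l r)) integrable_on {t0..s}"
      by (intro integrable_continuous_real w_sum_cont)
    show "(\<lambda>r. real CARD('n) * zn r) integrable_on {t0..s}"
      using integrable_cmul[OF zint_sub[of t0 s]] assms by simp
    fix r
    have "(\<Sum>l\<in>UNIV. norm (w l r)) \<le> (\<Sum>l\<in>(UNIV::'n set). zn r)" by (intro sum_mono z_norm_ge_w)
    then show "(\<Sum>l\<in>UNIV. norm (w l r)) \<le> real CARD('n) * zn r" by simp
  qed
  then show ?thesis by simp
qed

lemma window_budget:
  assumes "0 \<le> t0" "t0 \<le> t1" "t1 \<le> tend"
  obtains Zu where "0 \<le> Zu" "\<And>j r. r \<in> {t0..t1} \<Longrightarrow> norm (y r $ j - y t0 $ j) \<le> Zu"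
    "2 * Zu + w_mass w t0 t1 \<le> input_integral t1 - input_integral t0"
proof
  define Zu where "Zu = integral {t0..t1} (\<lambda>s. zn s)"
  show "0 \<le> Zu" unfolding Zu_def using assms by (intro integral_nonneg zint_sub) (auto simp: z_norm_nonneg)
  show "\<And>j r. r \<in> {t0..t1} \<Longrightarrow> norm (y r $ j - y t0 $ j) \<le> Zu"
    unfolding Zu_def using assms by (intro leader_displacement) auto
  have "(\<lambda>r. input_weight TYPE('n) * zn r) integrable_on {0..t1}"
    using integrable_cmul[OF zint_sub[of 0 t1]] assms by simp
  then have "input_integral t0 + integral {t0..t1} (\<lambda>r. input_weight TYPE('n) * zn r) = input_integral t1"
    unfolding input_integral_def using assms
    by (intro Henstock_Kurzweil_Integration.integral_combine) auto
  then have "input_integral t1 - input_integral t0 = input_weight TYPE('n) * Zu"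
    unfolding Zu_def by simp
  then show "2 * Zu + w_mass w t0 t1 \<le> input_integral t1 - input_integral t0"
    using w_mass_le[OF assms] unfolding Zu_def input_weight_def by (simp add: algebra_simps)
qed

lemma input_integral_nonneg:
  assumes "0 \<le> s" "s \<le> tend"
  shows "0 \<le> input_integral s"
  unfolding input_integral_def input_weight_def using zint_sub[of 0 s] assms
  by (intro integral_nonneg integrable_cmul) (auto simp: z_norm_nonneg)

lemma hull_dist_invariant:
  assumes "0 \<le> t0" "t0 \<le> s" "s \<le> tend"
  shows "hull_dist (x s) (y s) \<le> hull_dist (x t0) (y t0) + (input_integral s - input_integral t0)"
proof -
  obtain Zu where Zu: "0 \<le> Zu" and Hy: "\<And>j r. r \<in> {t0..s} \<Longrightarrow> norm (y r $ j - y t0 $ j) \<le> Zu"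
    and B: "2 * Zu + w_mass w t0 s \<le> input_integral s - input_integral t0"
    using window_budget[OF assms] by blast
  show ?thesis
  proof (rule hull_dist_le_support_bound)
    show "0 \<le> hull_dist (x t0) (y t0) + (input_integral s - input_integral t0)"
      using hull_dist_nonneg[of "x t0" "y t0"] B Zu w_mass_nonneg[OF assms(2)] by linarith
    fix e :: "real^'d" and i assume e: "norm e = 1"
    show "inner e (x s $ i) - (MAX j. inner e (y s $ j))
        \<le> hull_dist (x t0) (y t0) + (input_integral s - input_integral t0)"
      using support_gap_invariant[OF assms(1,2) e Zu Hy, of i] B by simp
  qed
qed

lemma hull_dist_contracts:
  assumes t0: "0 \<le> t0" and t1: "t1 = t0 + real CARD('n) * W" "t1 \<le> tend"
    and W: "tauD \<le> W" and spread: "spreading \<sigma> tauD W t0"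
  shows "hull_dist (x t1) (y t1)
    \<le> W.contraction_rate tauD W * hull_dist (x t0) (y t0) + (input_integral t1 - input_integral t0)"
proof -
  have t01: "t0 \<le> t1" using t1 W tauD by simp
  obtain Zu where Zu: "0 \<le> Zu" and Hy: "\<And>j r. r \<in> {t0..t1} \<Longrightarrow> norm (y r $ j - y t0 $ j) \<le> Zu"
    and B: "2 * Zu + w_mass w t0 t1 \<le> input_integral t1 - input_integral t0"
    using window_budget[OF t0 t01 t1(2)] by blast
  have "0 < W" using W tauD by simp
  then have "0 \<le> W.contraction_rate tauD W * hull_dist (x t0) (y t0)"
    using mult_nonneg_nonneg[OF less_imp_le[OF W.contraction_rate_bounds(1)[OF tauD]] hull_dist_nonneg]
    by blast
  then show ?thesis
  proof (intro hull_dist_le_support_bound)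
    show "0 \<le> W.contraction_rate tauD W * hull_dist (x t0) (y t0) + (input_integral t1 - input_integral t0)"
      if "0 \<le> W.contraction_rate tauD W * hull_dist (x t0) (y t0)"
      using that B Zu w_mass_nonneg[OF t01] by linarith
    fix e :: "real^'d" and i assume e: "norm e = 1"
    show "inner e (x t1 $ i) - (MAX j. inner e (y t1 $ j))
        \<le> W.contraction_rate tauD W * hull_dist (x t0) (y t0) + (input_integral t1 - input_integral t0)"
      using support_gap_contracts[OF t0 e Zu t1(1) W spread Hy, of i] B by simp
  qed
qed

lemma hull_dist_periodic_decay:
  assumes W: "tauD \<le> W" and spread: "\<And>t0. t0 \<ge> 0 \<Longrightarrow> spreading \<sigma> tauD W t0"
    and m: "real m * (real CARD('n) * W) \<le> tend"
  shows "hull_dist (x (real m * (real CARD('n) * W))) (y (real m * (real CARD('n) * W)))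
    \<le> W.contraction_rate tauD W ^ m * hull_dist (x 0) (y 0) + input_integral (real m * (real CARD('n) * W))"
  using m
proof (induction m)
  case 0 then show ?case by (simp add: input_integral_def)
next
  case (Suc m)
  define P where "P = real CARD('n) * W"
  define \<rho> where "\<rho> = W.contraction_rate tauD W"
  define t0 where "t0 = real m * P"
  have WP: "0 < W" "0 < P" using W tauD unfolding P_def by simp_all
  have \<rho>: "0 < \<rho>" "\<rho> < 1" unfolding \<rho>_def using W.contraction_rate_bounds[OF tauD WP(1)] by auto
  have "t0 \<le> real (Suc m) * P" unfolding t0_def using WP by (intro mult_right_mono) auto
  then have "t0 \<le> tend" using Suc.prems unfolding P_def by linarith
  then have t0: "0 \<le> t0" "t0 \<le> tend" "real (Suc m) * P = t0 + real CARD('n) * W"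
    using WP unfolding t0_def P_def by (simp_all add: algebra_simps)
  have IH: "hull_dist (x t0) (y t0) \<le> \<rho> ^ m * hull_dist (x 0) (y 0) + input_integral t0"
    using Suc.IH t0(2) unfolding t0_def P_def \<rho>_def by simp
  have "hull_dist (x (real (Suc m) * P)) (y (real (Suc m) * P))
      \<le> \<rho> * hull_dist (x t0) (y t0) + (input_integral (real (Suc m) * P) - input_integral t0)"
    unfolding \<rho>_def using hull_dist_contracts[OF t0(1) t0(3) _ W spread[OF t0(1)]] Suc.prems
    unfolding P_def by simp
  also have "\<dots> \<le> \<rho> * (\<rho> ^ m * hull_dist (x 0) (y 0) + input_integral t0)
      + (input_integral (real (Suc m) * P) - input_integral t0)"
    using IH \<rho> by (intro add_right_mono mult_left_mono) auto
  also have "\<dots> \<le> \<rho> ^ Suc m * hull_dist (x 0) (y 0) + input_integral (real (Suc m) * P)"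
    using mult_left_le_one_le[OF input_integral_nonneg[OF t0(1,2)]] \<rho>
    by (simp add: algebra_simps)
  finally show ?case unfolding P_def \<rho>_def .
qed

lemma hull_dist_decay:
  assumes te: "0 \<le> tend" and T: "T > 0"
    and conn: "\<forall>t\<ge>0. L_connected (joint_graph \<sigma> t (t + T))"
  defines "\<rho> \<equiv> W.contraction_rate tauD (T + 2 * tauD)"
    and "P \<equiv> real CARD('n) * (T + 2 * tauD)"
  shows "hull_dist (x tend) (y tend) \<le> hull_dist (x 0) (y 0) / \<rho> * exp (ln \<rho> / P * tend) + input_integral tend"
proof -
  have W: "tauD \<le> T + 2 * tauD" using T tauD by simp
  have P: "P > 0" unfolding P_def using T tauD by simp
  have \<rho>: "0 < \<rho>" "\<rho> < 1" unfolding \<rho>_def using W.contraction_rate_bounds[OF tauD] T tauD by auto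
  define m where "m = nat \<lfloor>tend / P\<rfloor>"
  have m: "real m * P \<le> tend" "tend < real m * P + P"
  proof -
    have "real m = real_of_int \<lfloor>tend / P\<rfloor>" unfolding m_def using te P by simp
    then have "real m \<le> tend / P" "tend / P < real m + 1" by linarith+
    then show "real m * P \<le> tend" "tend < real m * P + P" using P by (simp_all add: field_simps)
  qed
  have "hull_dist (x tend) (y tend)
      \<le> hull_dist (x (real m * P)) (y (real m * P)) + (input_integral tend - input_integral (real m * P))"
    using hull_dist_invariant[OF _ m(1)] P by simp
  also have "\<dots> \<le> \<rho> ^ m * hull_dist (x 0) (y 0) + input_integral tend"
    using hull_dist_periodic_decay[OF W spreading_from_UJLC[OF dwell_axioms T conn] m(1)[unfolded P_def]]
    unfolding \<rho>_def P_def by simp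
  also have "\<rho> ^ m * hull_dist (x 0) (y 0) \<le> exp (ln \<rho> / P * tend) / \<rho> * hull_dist (x 0) (y 0)"
    using geometric_le_exp[OF \<rho> P m(2)] hull_dist_nonneg by (rule mult_right_mono)
  finally show ?thesis by (simp add: mult.commute)
qed

end

end

section \<open>Comparison functions and the main theorem\<close>

lemma class_KL_exp:
  fixes \<rho> c :: real
  assumes \<rho>: "0 < \<rho>" and c: "c < 0"
  shows "class_KL (\<lambda>r t. r / \<rho> * exp (c * t))"
  unfolding class_KL_def
proof (intro conjI allI impI)
  fix t :: real
  show "class_K (\<lambda>r. r / \<rho> * exp (c * t))" unfolding class_K_def
  proof (intro conjI)
    show "continuous_on {0..} (\<lambda>r. r / \<rho> * exp (c * t))" using \<rho> by (intro continuous_intros) auto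
    show "strict_mono_on {0..} (\<lambda>r. r / \<rho> * exp (c * t))"
      unfolding strict_mono_on_def using \<rho> by (auto intro!: mult_strict_right_mono divide_strict_right_mono)
  qed simp
next
  fix r :: real assume r: "0 \<le> r"
  show "antimono_on {0..} (\<lambda>t. r / \<rho> * exp (c * t))"
    unfolding monotone_on_def
  proof (intro ballI impI)
    fix s t :: real assume "s \<le> t"
    then have "exp (c * t) \<le> exp (c * s)" using c by (simp add: mult_left_mono_neg)
    then show "r / \<rho> * exp (c * t) \<le> r / \<rho> * exp (c * s)" using r \<rho> by (intro mult_left_mono) auto
  qed
  have "filterlim (\<lambda>t. c * t) at_bot at_top"
    by (rule filterlim_tendsto_neg_mult_at_bot[OF tendsto_const c filterlim_ident])
  then have "((\<lambda>t. exp (c * t)) \<longlongrightarrow> 0) at_top" by (rule filterlim_compose[OF exp_at_bot])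
  then show "((\<lambda>t. r / \<rho> * exp (c * t)) \<longlongrightarrow> 0) at_top"
    using tendsto_mult_right_zero by blast
qed

lemma class_K_scale:
  fixes C :: real
  assumes "C > 0"
  shows "class_K (\<lambda>r. C * r)"
  unfolding class_K_def strict_mono_on_def using assms by (auto intro!: continuous_intros)

lemma integrable_if_nn_integral_finite:
  fixes g :: "real \<Rightarrow> real"
  assumes meas: "g \<in> borel_measurable (lebesgue_on {0..t})" and nonneg: "\<And>s. 0 \<le> g s" and C: "C \<ge> 1"
    and fin: "(\<integral>\<^sup>+ s\<in>{0..t}. ennreal (C * g s) \<partial>lborel) < \<infinity>"
  shows "g integrable_on {0..t} \<and> (\<integral>\<^sup>+ s\<in>{0..t}. ennreal (C * g s) \<partial>lborel) = ennreal (integral {0..t} (\<lambda>s. C * g s))"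
proof -
  have eq: "(\<integral>\<^sup>+ s\<in>{0..t}. ennreal (C * g s) \<partial>lborel) = (\<integral>\<^sup>+ s. ennreal (C * g s) \<partial>lebesgue_on {0..t})"
  proof -
    have "(\<integral>\<^sup>+ s\<in>{0..t}. ennreal (C * g s) \<partial>lborel) = (\<integral>\<^sup>+ s\<in>{0..t}. ennreal (C * g s) \<partial>lebesgue)"
      by (simp add: nn_integral_completion)
    also have "\<dots> = (\<integral>\<^sup>+ s. ennreal (C * g s) \<partial>lebesgue_on {0..t})"
      by (simp add: nn_integral_restrict_space)
    finally show ?thesis .
  qed
  have "(\<integral>\<^sup>+ s. ennreal (norm (g s)) \<partial>lebesgue_on {0..t}) \<le> (\<integral>\<^sup>+ s. ennreal (C * g s) \<partial>lebesgue_on {0..t})"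
  proof (rule nn_integral_mono)
    fix s
    have "g s \<le> C * g s" using C nonneg[of s] mult_right_mono[of 1 C "g s"] by simp
    then show "ennreal (norm (g s)) \<le> ennreal (C * g s)" using nonneg[of s] by (simp add: ennreal_leI)
  qed
  then have "(\<integral>\<^sup>+ s. ennreal (norm (g s)) \<partial>lebesgue_on {0..t}) < \<infinity>" using fin eq by simp
  then have "integrable (lebesgue_on {0..t}) g" using meas by (simp add: integrable_iff_bounded)
  then have gi: "g integrable_on {0..t}" by (intro integrable_on_lebesgue_on) auto
  then have "((\<lambda>s. C * g s) has_integral integral {0..t} (\<lambda>s. C * g s)) {0..t}"
    using integrable_cmul[OF gi, of C] by (intro integrable_integral) simp
  then have "(\<integral>\<^sup>+ s. ennreal (C * g s) * indicator {0..t} s \<partial>lborel) = ennreal (integral {0..t} (\<lambda>s. C * g s))"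
    using C nonneg by (intro nn_integral_has_integral_lebesgue') auto
  then show ?thesis using gi by simp
qed

context bounded_solution5
begin

lemma siiss_estimate:
  assumes t: "0 \<le> t" and T: "T > 0"
    and conn: "\<forall>t\<ge>0. L_connected (joint_graph \<sigma> t (t + T))"
  defines "\<rho> \<equiv> W.contraction_rate tauD (T + 2 * tauD)"
    and "P \<equiv> real CARD('n) * (T + 2 * tauD)"
  shows "ennreal (hull_dist (x t) (y t))
    \<le> ennreal (hull_dist (x 0) (y 0) / \<rho> * exp (ln \<rho> / P * t))
      + (\<integral>\<^sup>+ s\<in>{0..t}. ennreal (input_weight TYPE('n) * zn s) \<partial>lborel)"
    (is "_ \<le> _ + ?N")
proof (cases "?N < \<infinity>")
  case False
  then have "?N = \<infinity>" by (simp add: less_top[symmetric])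
  then show ?thesis by simp
next
  case True
  have meas: "(\<lambda>s. zn s) \<in> borel_measurable (lebesgue_on {0..t})"
  proof -
    have "(\<lambda>s. ul j s) \<in> borel_measurable (lebesgue_on {0..t})" for j
      using has_integral_integrable[OF y_int[OF t, of j]] by (rule integrable_imp_measurable)
    moreover have "(\<lambda>s. w i s) \<in> borel_measurable (lebesgue_on {0..t})" for i
      using w_cont by (intro continuous_imp_measurable_on_sets_lebesgue) (auto intro: continuous_on_subset)
    ultimately show ?thesis unfolding z_norm_def by measurable
  qed
  have "1 \<le> input_weight TYPE('n)" unfolding input_weight_def by simp
  from integrable_if_nn_integral_finite[OF meas _ this True] z_norm_nonneg
  have zint: "(\<lambda>s. zn s) integrable_on {0..t}" and N: "?N = ennreal (input_integral t)"
    unfolding input_integral_def by auto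
  have \<rho>: "0 < \<rho>" unfolding \<rho>_def using W.contraction_rate_bounds[OF tauD] T tauD by auto
  have "ennreal (hull_dist (x t) (y t))
      \<le> ennreal (hull_dist (x 0) (y 0) / \<rho> * exp (ln \<rho> / P * t) + input_integral t)"
    using hull_dist_decay[OF zint t T conn] unfolding \<rho>_def P_def by (rule ennreal_leI)
  also have "\<dots> = ennreal (hull_dist (x 0) (y 0) / \<rho> * exp (ln \<rho> / P * t)) + ennreal (input_integral t)"
  proof (rule ennreal_plus)
    show "0 \<le> hull_dist (x 0) (y 0) / \<rho> * exp (ln \<rho> / P * t)"
      using \<rho> hull_dist_nonneg[of "x 0" "y 0"] by simp
  qed (rule input_integral_nonneg[OF zint t order.refl])
  finally show ?thesis unfolding N .
qed

end

theorem theorem2: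
  fixes \<sigma> :: "real \<Rightarrow> ('n::finite, 'k::finite) digraph"
    and P :: "('n, 'k) digraph set"
    and tauD :: real
    and a :: "'n \<Rightarrow> 'n \<Rightarrow> real^'d^'n \<Rightarrow> real^'d^'k \<Rightarrow> real \<Rightarrow> real"
    and b :: "'n \<Rightarrow> 'k \<Rightarrow> real^'d^'n \<Rightarrow> real^'d^'k \<Rightarrow> real \<Rightarrow> real"
    and a_lo a_hi b_lo :: real
  assumes n_ge_2: "CARD('n) \<ge> 2"
    and P_finite: "finite P"
    and P_graphs: "\<forall>E \<in> P. no_arc_into_leader E"
    and sigma_in_P: "\<forall>t \<ge> 0. \<sigma> t \<in> P"
    and dwell: "dwell_time_signal \<sigma> tauD"
    and a_cont: "\<forall>i j. continuous_on UNIV (\<lambda>(x, y, t). a i j x y t)"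
    and b_cont: "\<forall>i j. continuous_on UNIV (\<lambda>(x, y, t). b i j x y t)"
    and weight_consts: "0 < a_lo" "a_lo \<le> a_hi" "0 < b_lo"
    and a_bounds: "\<forall>i j x y t. a_lo \<le> a i j x y t \<and> a i j x y t \<le> a_hi"
    and b_bound: "\<forall>i j x y t. b_lo \<le> b i j x y t"
    and ujlc: "UJLC \<sigma>"
  shows "\<exists>\<beta> \<gamma>. class_KL \<beta> \<and> class_K \<gamma> \<and>
    (\<forall>(u :: 'k \<Rightarrow> real^'d^'k \<Rightarrow> real \<Rightarrow> real^'d) (w :: 'n \<Rightarrow> real \<Rightarrow> real^'d) x y.
       (\<forall>j t. continuous_on UNIV (\<lambda>v. u j v t)) \<longrightarrow>
       (\<forall>j v. piecewise_continuous (\<lambda>t. u j v t)) \<longrightarrow>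
       (\<forall>i. continuous_on UNIV (w i)) \<longrightarrow>
       is_solution5 \<sigma> a b u w x y \<longrightarrow>
       (\<forall>t \<ge> 0. ennreal (hull_dist (x t) (y t))
          \<le> ennreal (\<beta> (hull_dist (x 0) (y 0)) t)
            + (\<integral>\<^sup>+ s \<in> {0..t}. ennreal (\<gamma> (z_norm u w y s)) \<partial>lborel)))"
proof -
  obtain ts where dw: "dwell \<sigma> tauD ts" using dwell_time_signal_dwell[OF dwell] by blast
  obtain T where T: "T > 0" and conn: "\<forall>t\<ge>0. L_connected (joint_graph \<sigma> t (t + T))"
    using ujlc unfolding UJLC_def by blast
  interpret G: gain_bounds a_lo a_hi b_lo "CARD('n)" by unfold_locales (use weight_consts in auto)
  define \<rho> where "\<rho> = G.contraction_rate tauD (T + 2 * tauD)"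
  define P where "P = real CARD('n) * (T + 2 * tauD)"
  have "tauD > 0" using dwell unfolding dwell_time_signal_def by blast
  then have \<rho>: "0 < \<rho>" "\<rho> < 1" and P: "P > 0"
    using G.contraction_rate_bounds[of tauD "T + 2 * tauD"] T unfolding \<rho>_def P_def by auto
  show ?thesis
  proof (intro exI[of _ "\<lambda>r t. r / \<rho> * exp (ln \<rho> / P * t)"]
      exI[of _ "\<lambda>r. input_weight TYPE('n) * r"] conjI allI impI)
    show "class_KL (\<lambda>r t. r / \<rho> * exp (ln \<rho> / P * t))"
      using class_KL_exp[OF \<rho>(1), of "ln \<rho> / P"] \<rho> P by (simp add: divide_neg_pos)
    show "class_K (\<lambda>r. input_weight TYPE('n) * r)"
      by (rule class_K_scale) (simp add: input_weight_def)
    fix u :: "'k \<Rightarrow> real^'d^'k \<Rightarrow> real \<Rightarrow> real^'d" and w :: "'n \<Rightarrow> real \<Rightarrow> real^'d" and x y and t :: real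
    assume "\<forall>j t. continuous_on UNIV (\<lambda>v. u j v t)" "\<forall>j v. piecewise_continuous (\<lambda>t. u j v t)"
      and w_cont: "\<forall>i. continuous_on UNIV (w i)" and sol: "is_solution5 \<sigma> a b u w x y"
      and t: "0 \<le> t"
    have "solution5 \<sigma> tauD ts a b u w x y"
      using dw a_cont b_cont w_cont sol by (simp add: solution5_def solution5_axioms_def)
    then interpret S: bounded_solution5 \<sigma> tauD ts a b u w x y a_lo a_hi b_lo
      using weight_consts a_bounds b_bound by (simp add: bounded_solution5_def bounded_solution5_axioms_def)
    show "ennreal (hull_dist (x t) (y t)) \<le> ennreal (hull_dist (x 0) (y 0) / \<rho> * exp (ln \<rho> / P * t))
        + (\<integral>\<^sup>+ s\<in>{0..t}. ennreal (input_weight TYPE('n) * z_norm u w y s) \<partial>lborel)"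
      using S.siiss_estimate[OF t T conn] unfolding \<rho>_def P_def .
  qed
qed

end
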